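(* Let $E=\prod_{i=1}^n\mathbb R^{p_i}$ and $Q=\prod_iQ_i$, where for each block $i$ one of the following setups is used: (Euclidean) $Q_i\subseteq\mathbb R^{p_i}$ is closed convex, $\|x^{(i)}\|_i^2=\langle B_ix^{(i)},x^{(i)}\rangle$ with $B_i$ symmetric positive definite, $d_i=\frac12\|\cdot\|_i^2$, $V_i[z](x)=\frac12\|x-z\|_i^2$; or (entropy) $Q_i=\{x\in\mathbb R^{p_i}_+:\sum_jx_j=1\}$, $\|\cdot\|_i=\|\cdot\|_1$, $d_i(x)=\sum_jx_j\ln x_j$, $V_i[z](x)=\sum_jx_j\ln\frac{x_j}{z_j}$. Let $f$ be convex and differentiable with block-wise Lipschitz gradient: $\|U_i^T\nabla f(x+U_ih)-U_i^T\nabla f(x)\|_{i,*}\le L_i\|h\|_i$ for all $i$, $x\in Q$, $h\in\mathbb R^{p_i}$ with $x+U_ih\in Q$; let $L_0=\min_iL_i$, and let $x_*$ minimize $f$ on $Q$, $f_*=f(x_* )$. Apply RSTM (see context) with $\rho=n$, $V[z](x)=\sum_iL_iV_i[z^{(i)}](x^{(i)})$, $u_0$ in the relative interior of $Q$ for entropy blocks, and oracle $G(x)=n\widetilde U_i(U_i^T\nabla f(x)+\xi(x))$ with $i$ uniform on $\{1,\dots,n\}$ and $\|\xi(x)\|_{i,*}\le\Delta$ for all $x\in Q$. Let $P_0^2=(1-\frac1n)(f(x_0)-f_* )+V[u_0](x_* )$. (1) Fix $k\ge1$. If at all iterations up to $k$ the error level satisfies $\Delta\le\frac{P_0\sqrt{L_0}}{4nA_k}$,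 then $\mathbb Ef(x_k)-f_*\le\frac{6n^2P_0^2}{(k-1+2n)^2}$. (2) In general, for all $k\ge1$, $\mathbb Ef(x_k)-f_*\le\frac{8n^2P_0^2}{(k-1+2n)^2}+\frac4{L_0}(k-1+2n)^2\Delta^2$.
   Context: $U_i:\mathbb R^{p_i}\to E$ embeds a vector as the $i$-th block (others zero); $U_i^T:E^*\to(\mathbb R^{p_i})^*$ extracts the $i$-th block of a dual vector; $\widetilde U_i$ embeds a dual vector of block $i$ into $E^*$. $\|\cdot\|_{i,*}$ is the dual norm of $\|\cdot\|_i$. RSTM with parameter $\rho\ge1$, feasible set $Q$, Bregman divergence $V[\cdot](\cdot)$ and random oracle $G$ (a random vector in $E^*$ for each query point, sampled afresh and independently of the past at each call): choose $u_0\in Q$, set $A_0=\alpha_0=1-\frac1\rho$, $x_0=y_0=u_0$; for $k\ge0$, $\alpha_{k+1}$ is the largest root of $A_k+\alpha_{k+1}=\rho^2\alpha_{k+1}^2$, $A_{k+1}=A_k+\alpha_{k+1}$, $y_{k+1}=\frac{\alpha_{k+1}u_k+A_kx_k}{A_{k+1}}$, $u_{k+1}=\arg\min_{x\in Q}\{V[u_k](x)+\alpha_{k+1}\langle G(y_{k+1}),x\rangle\}$, $x_{k+1}=y_{k+1}+\rho\frac{\alpha_{k+1}}{A_{k+1}}(u_{k+1}-u_k)$. $\mathbb E$ is the expectation over all randomness up to iteration $k$. *)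

theory Defs
  imports "HOL-Analysis.Analysis" "HOL-Probability.Product_PMF"
begin

text \<open>Coordinates of E are the finite type 'c; blk c is the block of coordinate c
  (blocks form the finite type 'b, n = CARD('b)); R^{p_i} is the subspace of vectors
  supported on block i.\<close>

definition blkspace :: "('c::finite \<Rightarrow> 'b) \<Rightarrow> 'b \<Rightarrow> (real^'c) set" where
  "blkspace blk i = {h. \<forall>c. blk c \<noteq> i \<longrightarrow> h $ c = 0}"

text \<open>U_i U_i^T: keep the i-th block, zero the others.\<close>
definition blockpart :: "('c::finite \<Rightarrow> 'b) \<Rightarrow> 'b \<Rightarrow> real^'c \<Rightarrow> real^'c" where
  "blockpart blk i x = (\<chi> c. if blk c = i then x $ c else 0)"

definition simplex_blk :: "('c::finite \<Rightarrow> 'b) \<Rightarrow> 'b \<Rightarrow> (real^'c) set" where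
  "simplex_blk blk i = {x \<in> blkspace blk i. (\<forall>c. x $ c \<ge> 0) \<and> (\<Sum>c\<in>{c. blk c = i}. x $ c) = 1}"

definition Qblk :: "('c::finite \<Rightarrow> 'b) \<Rightarrow> ('b \<Rightarrow> bool) \<Rightarrow> ('b \<Rightarrow> (real^'c) set) \<Rightarrow> 'b \<Rightarrow> (real^'c) set" where
  "Qblk blk eucl QE i = (if eucl i then QE i else simplex_blk blk i)"

definition Qprod :: "('c::finite \<Rightarrow> 'b) \<Rightarrow> ('b \<Rightarrow> bool) \<Rightarrow> ('b \<Rightarrow> (real^'c) set) \<Rightarrow> (real^'c) set" where
  "Qprod blk eucl QE = {x. \<forall>i. blockpart blk i x \<in> Qblk blk eucl QE i}"

definition bnorm :: "('c::finite \<Rightarrow> 'b) \<Rightarrow> ('b \<Rightarrow> bool) \<Rightarrow> ('b \<Rightarrow> 'c \<Rightarrow> 'c \<Rightarrow> real) \<Rightarrow> 'b \<Rightarrow> real^'c \<Rightarrow> real" where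
  "bnorm blk eucl B i h =
     (if eucl i then sqrt (\<Sum>c\<in>{c. blk c = i}. \<Sum>d\<in>{d. blk d = i}. B i c d * h $ c * h $ d)
      else (\<Sum>c\<in>{c. blk c = i}. \<bar>h $ c\<bar>))"

definition dnorm :: "('c::finite \<Rightarrow> 'b) \<Rightarrow> ('b \<Rightarrow> bool) \<Rightarrow> ('b \<Rightarrow> 'c \<Rightarrow> 'c \<Rightarrow> real) \<Rightarrow> 'b \<Rightarrow> real^'c \<Rightarrow> real" where
  "dnorm blk eucl B i g =
     Sup {blockpart blk i g \<bullet> h | h. h \<in> blkspace blk i \<and> bnorm blk eucl B i h \<le> 1}"

definition Vblk :: "('c::finite \<Rightarrow> 'b) \<Rightarrow> ('b \<Rightarrow> bool) \<Rightarrow> ('b \<Rightarrow> 'c \<Rightarrow> 'c \<Rightarrow> real) \<Rightarrow> 'b \<Rightarrow> real^'c \<Rightarrow> real^'c \<Rightarrow> real" where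
  "Vblk blk eucl B i z x =
     (if eucl i then (bnorm blk eucl B i (blockpart blk i (x - z)))\<^sup>2 / 2
      else (\<Sum>c\<in>{c. blk c = i}. x $ c * ln (x $ c / z $ c)))"

definition Vfull :: "('c::finite \<Rightarrow> 'b::finite) \<Rightarrow> ('b \<Rightarrow> bool) \<Rightarrow> ('b \<Rightarrow> 'c \<Rightarrow> 'c \<Rightarrow> real) \<Rightarrow> ('b \<Rightarrow> real) \<Rightarrow> real^'c \<Rightarrow> real^'c \<Rightarrow> real" where
  "Vfull blk eucl B L z x = (\<Sum>i\<in>UNIV. L i * Vblk blk eucl B i z x)"

primrec rstm_A :: "real \<Rightarrow> nat \<Rightarrow> real" where
  "rstm_A \<rho> 0 = 1 - 1 / \<rho>"
| "rstm_A \<rho> (Suc k) = rstm_A \<rho> k + (GREATEST a. rstm_A \<rho> k + a = \<rho>\<^sup>2 * a\<^sup>2)"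

fun rstm_alpha :: "real \<Rightarrow> nat \<Rightarrow> real" where
  "rstm_alpha \<rho> 0 = 1 - 1 / \<rho>"
| "rstm_alpha \<rho> (Suc k) = (GREATEST a. rstm_A \<rho> k + a = \<rho>\<^sup>2 * a\<^sup>2)"

end

theory Submission
  imports Defs
begin

text \<open>
  The proof is a Lyapunov argument for the potential
  \<open>\<Phi>\<^sub>k = A\<^sub>k (f x\<^sub>k - f\<^sub>*) + V[u\<^sub>k](x\<^sub>*)\<close>.
  For a fixed sequence of sampled blocks, one step combines the descent lemma on the sampled
  block, the three-point property of the Bregman prox step and the strong convexity of \<open>V\<close>
  (Pinsker's inequality on the entropy blocks). Averaging over the uniformly sampled block turns
  the scaled partial gradient into the full gradient, and convexity of \<open>f\<close> gives
  \<open>E \<Phi>\<^sub>j\<^sub>+\<^sub>1 \<le> E \<Phi>\<^sub>j + n \<alpha>\<^sub>j\<^sub>+\<^sub>1 \<Delta> \<surd>(2 E \<Phi>\<^sub>j\<^sub>+\<^sub>1 / L\<^sub>0)\<close>,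
  the noise being paired with \<open>x\<^sub>* - u\<^sub>j\<^sub>+\<^sub>1\<close> whose norm is controlled by \<open>V\<close>.
  Summing, the running maximum \<open>M\<close> of \<open>E \<Phi>\<^sub>j\<close> satisfies
  \<open>M \<le> P\<^sub>0\<^sup>2 + n \<Delta> \<surd>(2/L\<^sub>0) A\<^sub>k \<surd>M\<close>; solving this quadratic inequality in \<open>\<surd>M\<close> and using
  \<open>A\<^sub>k \<ge> (k - 1 + 2n)\<^sup>2 / (4n\<^sup>2)\<close> gives both bounds.
\<close>

section \<open>Block coordinates\<close>

lemma blockpart_nth [simp]: "blockpart blk i x $ c = (if blk c = i then x $ c else 0)"
  by (simp add: blockpart_def)

lemma blockpart_add: "blockpart blk i (x + y) = blockpart blk i x + blockpart blk i y"
  by (simp add: vec_eq_iff)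

lemma blockpart_diff: "blockpart blk i (x - y) = blockpart blk i x - blockpart blk i y"
  by (simp add: vec_eq_iff)

lemma blockpart_scaleR: "blockpart blk i (a *\<^sub>R x) = a *\<^sub>R blockpart blk i x"
  by (simp add: vec_eq_iff)

lemma blockpart_zero [simp]: "blockpart blk i 0 = 0"
  by (simp add: vec_eq_iff)

lemma blockpart_in_blkspace: "blockpart blk i x \<in> blkspace blk i"
  by (simp add: blkspace_def)

lemma blockpart_of_blkspace: "h \<in> blkspace blk i \<Longrightarrow> blockpart blk i h = h"
  by (auto simp: vec_eq_iff blkspace_def)

lemma blockpart_of_blkspace_other: "h \<in> blkspace blk i \<Longrightarrow> j \<noteq> i \<Longrightarrow> blockpart blk j h = 0"
  by (auto simp: vec_eq_iff blkspace_def)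

lemma sum_blockpart: "(\<Sum>i\<in>UNIV. blockpart (blk :: 'c::finite \<Rightarrow> 'b::finite) i x) = x"
  by (simp add: vec_eq_iff sum_component)

lemma blkspace_scaleR: "h \<in> blkspace blk i \<Longrightarrow> a *\<^sub>R h \<in> blkspace blk i"
  by (simp add: blkspace_def)

lemma closed_blkspace: "closed (blkspace blk i)"
proof -
  have "blkspace blk i = (\<Inter>c\<in>{c. blk c \<noteq> i}. {h. h $ c = 0})"
    by (auto simp: blkspace_def)
  moreover have "closed {h :: real^'a. h $ c = 0}" for c
    by (intro closed_Collect_eq continuous_intros)
  ultimately show ?thesis
    by auto
qed

lemma inner_blockpart: "blockpart blk i g \<bullet> h = (\<Sum>c\<in>{c. blk c = i}. g $ c * h $ c)"
proof -
  have "blockpart blk i g \<bullet> h = (\<Sum>c\<in>UNIV. if blk c = i then g $ c * h $ c else 0)"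
    unfolding inner_vec_def by (intro sum.cong) auto
  then show ?thesis
    by (simp add: sum.If_cases Int_def)
qed

lemma inner_blockpart_swap: "blockpart blk i g \<bullet> h = g \<bullet> blockpart blk i h"
  unfolding inner_vec_def by (intro sum.cong) auto

lemma inner_blockpart_both: "blockpart blk i g \<bullet> h = blockpart blk i g \<bullet> blockpart blk i h"
  unfolding inner_vec_def by (intro sum.cong) auto

definition replace_block :: "('c::finite \<Rightarrow> 'b) \<Rightarrow> 'b \<Rightarrow> real^'c \<Rightarrow> real^'c \<Rightarrow> real^'c" where
  "replace_block blk i z w = z - blockpart blk i z + blockpart blk i w"

lemma replace_block_nth: "replace_block blk i z w $ c = (if blk c = i then w $ c else z $ c)"
  by (simp add: replace_block_def)

lemma blockpart_replace_block:
  "blockpart blk j (replace_block blk i z w) = (if j = i then blockpart blk i w else blockpart blk j z)"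
  by (auto simp: vec_eq_iff replace_block_nth)

lemma inner_replace_block:
  "g \<bullet> replace_block blk i z w = g \<bullet> z - blockpart blk i g \<bullet> z + blockpart blk i g \<bullet> w"
  by (simp add: replace_block_def inner_diff_right inner_add_right inner_blockpart_swap)

definition quad_form :: "('c::finite \<Rightarrow> 'b) \<Rightarrow> ('b \<Rightarrow> 'c \<Rightarrow> 'c \<Rightarrow> real) \<Rightarrow> 'b \<Rightarrow> real^'c \<Rightarrow> real" where
  "quad_form blk B i h = (\<Sum>c\<in>{c. blk c = i}. \<Sum>d\<in>{d. blk d = i}. B i c d * h $ c * h $ d)"

definition bilin_form ::
    "('c::finite \<Rightarrow> 'b) \<Rightarrow> ('b \<Rightarrow> 'c \<Rightarrow> 'c \<Rightarrow> real) \<Rightarrow> 'b \<Rightarrow> real^'c \<Rightarrow> real^'c \<Rightarrow> real" where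
  "bilin_form blk B i v w = (\<Sum>c\<in>{c. blk c = i}. \<Sum>d\<in>{d. blk d = i}. B i c d * v $ c * w $ d)"

lemma quad_form_blockpart: "quad_form blk B i (blockpart blk i h) = quad_form blk B i h"
  by (simp add: quad_form_def)

lemma quad_form_zero [simp]: "quad_form blk B i 0 = 0"
  by (simp add: quad_form_def)

lemma quad_form_scaleR: "quad_form blk B i (a *\<^sub>R h) = a\<^sup>2 * quad_form blk B i h"
  by (simp add: quad_form_def sum_distrib_left power2_eq_square algebra_simps)

lemma continuous_on_quad_form: "continuous_on S (quad_form blk B i)"
  unfolding quad_form_def by (intro continuous_intros)

lemma quad_form_add_scaleR:
  assumes "\<forall>c d. B i c d = B i d c"
  shows "quad_form blk B i (v + t *\<^sub>R w)
           = quad_form blk B i v + 2 * t * bilin_form blk B i v w + t\<^sup>2 * quad_form blk B i w"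
proof -
  have swap: "(\<Sum>c\<in>{c. blk c = i}. \<Sum>d\<in>{d. blk d = i}. B i c d * w $ c * v $ d) = bilin_form blk B i v w"
    unfolding bilin_form_def by (subst sum.swap) (intro sum.cong refl, simp add: assms ac_simps)
  have "quad_form blk B i (v + t *\<^sub>R w) = (\<Sum>c\<in>{c. blk c = i}. \<Sum>d\<in>{d. blk d = i}.
      B i c d * v $ c * v $ d + t * (B i c d * v $ c * w $ d) + t * (B i c d * w $ c * v $ d)
      + t\<^sup>2 * (B i c d * w $ c * w $ d))"
    unfolding quad_form_def by (intro sum.cong refl) (simp add: algebra_simps power2_eq_square)
  also have "\<dots> = quad_form blk B i v + t * bilin_form blk B i v w + t * bilin_form blk B i v w
                   + t\<^sup>2 * quad_form blk B i w"
    using swap[unfolded bilin_form_def]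
    by (simp add: sum.distrib sum_distrib_left[symmetric] quad_form_def bilin_form_def)
  finally show ?thesis
    by simp
qed

section \<open>Pinsker's inequality\<close>

lemma has_real_derivative_ln_minus_rational:
  fixes s :: real
  assumes "s > 0"
  shows "((\<lambda>t. ln t - (t - 1) * (5 * t + 1) / (2 * t * (t + 2))) has_real_derivative
           (s - 1) ^ 3 / (s\<^sup>2 * (s + 2)\<^sup>2)) (at s)"
proof -
  have "0 < s \<Longrightarrow> ((\<lambda>t. ln t - (t - 1) * (5 * t + 1) / (2 * t * (t + 2))) has_real_derivative
          1 / s - ((10 * s - 4) * (2 * s * (s + 2)) - (s - 1) * (5 * s + 1) * (4 * s + 4))
          / (4 * (s * ((s + 2) * (s * (s + 2)))))) (at s)"
    by (rule derivative_eq_intros refl | simp)+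
  moreover have "1 / s - ((10 * s - 4) * (2 * s * (s + 2)) - (s - 1) * (5 * s + 1) * (4 * s + 4))
          / (4 * (s * ((s + 2) * (s * (s + 2))))) = (s - 1) ^ 3 / (s\<^sup>2 * (s + 2)\<^sup>2)"
  proof -
    define D where "D = 4 * (s * ((s + 2) * (s * (s + 2))))"
    have "1 / s = (4 * s * (s + 2)\<^sup>2) / D"
      using assms by (simp add: D_def power2_eq_square)
    moreover have "4 * s * (s + 2)\<^sup>2 - ((10 * s - 4) * (2 * s * (s + 2))
        - (s - 1) * (5 * s + 1) * (4 * s + 4)) = 4 * (s - 1) ^ 3"
      by (simp add: algebra_simps power2_eq_square power3_eq_cube)
    moreover have "4 * (s - 1) ^ 3 / D = (s - 1) ^ 3 / (s\<^sup>2 * (s + 2)\<^sup>2)"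
      by (simp add: D_def power2_eq_square ac_simps)
    ultimately show ?thesis
      unfolding D_def[symmetric] by (simp add: diff_divide_distrib[symmetric])
  qed
  ultimately show ?thesis
    using assms by simp
qed

lemma ln_ge_rational_bound:
  fixes t :: real
  assumes "t > 0"
  shows "ln t \<ge> (t - 1) * (5 * t + 1) / (2 * t * (t + 2))"
proof -
  define g where "g = (\<lambda>s. ln s - (s - 1) * (5 * s + 1) / (2 * s * (s + 2 :: real)))"
  have deriv: "(g has_real_derivative (s - 1) ^ 3 / (s\<^sup>2 * (s + 2)\<^sup>2)) (at s)" if "s > 0" for s
    unfolding g_def using that by (rule has_real_derivative_ln_minus_rational)
  have cont: "continuous_on {a..b} g" if "a > 0" for a b
    unfolding g_def using that by (intro continuous_intros) auto
  have "g 1 \<le> g t"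
  proof (cases "t \<ge> 1")
    case True
    show ?thesis
      by (rule DERIV_nonneg_imp_increasing_open[OF True _ cont])
         (auto intro!: exI deriv)
  next
    case False
    have "g t \<ge> g 1"
    proof (rule DERIV_nonpos_imp_decreasing_open[OF _ _ cont])
      fix s assume s: "t < s" "s < 1"
      then have "(s - 1) ^ 3 \<le> 0"
        by (simp add: power_le_zero_eq)
      then show "\<exists>y. (g has_real_derivative y) (at s) \<and> y \<le> 0"
        using s assms by (intro exI[of _ "(s - 1) ^ 3 / (s\<^sup>2 * (s + 2)\<^sup>2)"])
          (auto intro!: deriv divide_nonpos_pos)
    qed (use False assms in auto)
    then show ?thesis
      by simp
  qed
  then show ?thesis
    by (simp add: g_def)
qed

lemma xlnx_ratio_lower_bound:
  fixes x z :: real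
  assumes "x \<ge> 0" "z > 0"
  shows "x * ln (x / z) - x + z \<ge> 3 * (x - z)\<^sup>2 / (2 * (x + 2 * z))"
proof (cases "x = 0")
  case True
  then show ?thesis
    using assms by (simp add: power2_eq_square field_simps)
next
  case False
  with assms have x: "x > 0"
    by simp
  define t where "t = x / z"
  have t: "t > 0" and x_eq: "x = z * t"
    using x assms by (simp_all add: t_def)
  have "(t - 1) * (5 * t + 1) \<le> ln t * (2 * t * (t + 2))"
    using ln_ge_rational_bound[OF t] t by (simp add: pos_divide_le_eq)
  then have "z\<^sup>2 * ((t - 1) * (5 * t + 1)) \<le> z\<^sup>2 * (ln t * (2 * t * (t + 2)))"
    by (intro mult_left_mono) auto
  then have "(x - z) * (5 * x + z) \<le> 2 * x * (x + 2 * z) * ln (x / z)"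
    unfolding x_eq using assms by (simp add: algebra_simps power2_eq_square)
  then have "3 * (x - z)\<^sup>2 \<le> 2 * (x + 2 * z) * (x * ln (x / z) - x + z)"
    by (simp add: algebra_simps power2_eq_square)
  then show ?thesis
    using x assms by (simp add: pos_divide_le_eq mult.commute)
qed

text \<open>Cauchy--Schwarz against the weights \<open>(x + 2z)/3\<close>, which again sum to one, reduces the
  inequality to the pointwise bound above.\<close>

lemma pinsker_inequality:
  fixes x z :: "'a \<Rightarrow> real"
  assumes "finite S" and x_nonneg: "\<forall>c\<in>S. x c \<ge> 0" and z_pos: "\<forall>c\<in>S. z c > 0"
    and sum_x: "(\<Sum>c\<in>S. x c) = 1" and sum_z: "(\<Sum>c\<in>S. z c) = 1"
  shows "(\<Sum>c\<in>S. \<bar>x c - z c\<bar>)\<^sup>2 \<le> 2 * (\<Sum>c\<in>S. x c * ln (x c / z c))"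
proof -
  define w where "w c = (x c + 2 * z c) / 3" for c
  have w_pos: "w c > 0" if "c \<in> S" for c
    using x_nonneg z_pos that by (simp add: w_def add_nonneg_pos)
  have sum_w: "(\<Sum>c\<in>S. w c) = 1"
    by (simp add: w_def sum_divide_distrib[symmetric] sum.distrib sum_distrib_left[symmetric] sum_x sum_z)
  have "(\<Sum>c\<in>S. \<bar>x c - z c\<bar>)\<^sup>2 = (\<Sum>c\<in>S. (\<bar>x c - z c\<bar> / sqrt (w c)) * sqrt (w c))\<^sup>2"
    using w_pos by (intro arg_cong[where f = "\<lambda>a. a\<^sup>2"] sum.cong) (auto dest: w_pos intro: less_imp_neq[symmetric])
  also have "\<dots> \<le> (\<Sum>c\<in>S. (\<bar>x c - z c\<bar> / sqrt (w c))\<^sup>2) * (\<Sum>c\<in>S. (sqrt (w c))\<^sup>2)"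
    by (rule Cauchy_Schwarz_ineq_sum)
  also have "(\<Sum>c\<in>S. (sqrt (w c))\<^sup>2) = 1"
    using w_pos sum_w by (simp add: less_imp_le)
  also have "(\<Sum>c\<in>S. (\<bar>x c - z c\<bar> / sqrt (w c))\<^sup>2) = (\<Sum>c\<in>S. 3 * (x c - z c)\<^sup>2 / (x c + 2 * z c))"
    using w_pos by (intro sum.cong refl) (auto simp: power_divide less_imp_le w_def)
  also have "\<dots> \<le> (\<Sum>c\<in>S. 2 * (x c * ln (x c / z c) - x c + z c))"
  proof (rule sum_mono)
    fix c assume "c \<in> S"
    then have "x c \<ge> 0" "z c > 0"
      using x_nonneg z_pos by auto
    then show "3 * (x c - z c)\<^sup>2 / (x c + 2 * z c) \<le> 2 * (x c * ln (x c / z c) - x c + z c)"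
      using xlnx_ratio_lower_bound[of "x c" "z c"] by (simp add: field_simps)
  qed
  also have "\<dots> = 2 * (\<Sum>c\<in>S. x c * ln (x c / z c))"
    by (simp add: sum_distrib_left[symmetric] sum.distrib sum_subtractf sum_x sum_z)
  finally show ?thesis
    by simp
qed

section \<open>Block norms and the Bregman divergence\<close>

locale block_setup =
  fixes blk :: "'c::finite \<Rightarrow> 'b::finite"
    and eucl :: "'b \<Rightarrow> bool"
    and QE :: "'b \<Rightarrow> (real^'c) set"
    and B :: "'b \<Rightarrow> 'c \<Rightarrow> 'c \<Rightarrow> real"
    and L :: "'b \<Rightarrow> real"
  assumes convex_QE: "\<And>i. eucl i \<Longrightarrow> convex (QE i)"
    and B_sym: "\<And>i c d. eucl i \<Longrightarrow> B i c d = B i d c"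
    and quad_form_pos: "\<And>i h. eucl i \<Longrightarrow> h \<in> blkspace blk i \<Longrightarrow> h \<noteq> 0 \<Longrightarrow> quad_form blk B i h > 0"
    and L_pos: "\<And>i. L i > 0"
begin

abbreviation "Q \<equiv> Qprod blk eucl QE"

abbreviation "V \<equiv> Vfull blk eucl B L"

lemma quad_form_nonneg: "eucl i \<Longrightarrow> quad_form blk B i h \<ge> 0"
  using quad_form_pos[of i "blockpart blk i h"] blockpart_in_blkspace[of blk i h]
    quad_form_blockpart[of blk B i h]
  by (cases "blockpart blk i h = 0") (auto simp: quad_form_def)

lemma bnorm_eucl: "eucl i \<Longrightarrow> bnorm blk eucl B i h = sqrt (quad_form blk B i h)"
  by (simp add: bnorm_def quad_form_def)

lemma bnorm_entropy: "\<not> eucl i \<Longrightarrow> bnorm blk eucl B i h = (\<Sum>c\<in>{c. blk c = i}. \<bar>h $ c\<bar>)"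
  by (simp add: bnorm_def)

lemma bnorm_blockpart: "bnorm blk eucl B i (blockpart blk i h) = bnorm blk eucl B i h"
  by (simp add: bnorm_def)

lemma bnorm_nonneg: "bnorm blk eucl B i h \<ge> 0"
  by (cases "eucl i") (auto simp: bnorm_eucl bnorm_entropy quad_form_nonneg intro: sum_nonneg)

lemma bnorm_zero [simp]: "bnorm blk eucl B i 0 = 0"
  by (cases "eucl i") (simp_all add: bnorm_eucl bnorm_entropy)

lemma bnorm_scaleR: "bnorm blk eucl B i (a *\<^sub>R h) = \<bar>a\<bar> * bnorm blk eucl B i h"
  by (cases "eucl i")
    (simp_all add: bnorm_eucl bnorm_entropy quad_form_scaleR real_sqrt_mult abs_mult sum_distrib_left)

lemma bnorm_eq_0_imp: "bnorm blk eucl B i h = 0 \<Longrightarrow> blockpart blk i h = 0"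
proof (cases "eucl i")
  case True
  assume "bnorm blk eucl B i h = 0"
  with True have "quad_form blk B i (blockpart blk i h) = 0"
    by (simp add: bnorm_eucl quad_form_nonneg quad_form_blockpart)
  show ?thesis
  proof (rule ccontr)
    assume "blockpart blk i h \<noteq> 0"
    then have "quad_form blk B i (blockpart blk i h) > 0"
      using True by (intro quad_form_pos blockpart_in_blkspace)
    then show False
      using \<open>quad_form blk B i (blockpart blk i h) = 0\<close> by simp
  qed
next
  case False
  assume "bnorm blk eucl B i h = 0"
  with False have "\<forall>c\<in>{c. blk c = i}. \<bar>h $ c\<bar> = 0"
    by (subst sum_nonneg_eq_0_iff[symmetric]) (auto simp: bnorm_entropy)
  then show ?thesis
    by (auto simp: vec_eq_iff)
qed

text \<open>A positive definite quadratic form is bounded below on the compact unit sphere of its block.\<close>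

lemma quad_form_ge_sq_norm:
  assumes "eucl i"
  obtains m where "m > 0" "\<And>h. h \<in> blkspace blk i \<Longrightarrow> m * (norm h)\<^sup>2 \<le> quad_form blk B i h"
proof -
  define S where "S = blkspace blk i \<inter> sphere 0 1"
  have unit: "(1 / norm h) *\<^sub>R h \<in> S" if "h \<in> blkspace blk i" "h \<noteq> 0" for h
    using that by (auto simp: S_def blkspace_scaleR)
  show ?thesis
  proof (cases "S = {}")
    case True
    show ?thesis
    proof (rule that)
      show "(0::real) < 1"
        by simp
      fix h assume "h \<in> blkspace blk i"
      then have "h = 0"
        using unit True by blast
      then show "1 * (norm h)\<^sup>2 \<le> quad_form blk B i h"
        by simp
    qed
  next
    case False
    have "compact S"
      unfolding S_def by (intro closed_Int_compact closed_blkspace compact_sphere)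
    from continuous_attains_inf[OF this False continuous_on_quad_form[of S blk B i]]
    obtain h0 where h0: "h0 \<in> S" "\<forall>y\<in>S. quad_form blk B i h0 \<le> quad_form blk B i y"
      by blast
    have "quad_form blk B i h0 > 0"
      using h0(1) assms unfolding S_def by (intro quad_form_pos) auto
    moreover have "quad_form blk B i h0 * (norm h)\<^sup>2 \<le> quad_form blk B i h" if "h \<in> blkspace blk i" for h
    proof (cases "h = 0")
      case False
      have "quad_form blk B i h0 \<le> quad_form blk B i ((1 / norm h) *\<^sub>R h)"
        using h0(2) unit[OF that False] by blast
      also have "\<dots> = quad_form blk B i h / (norm h)\<^sup>2"
        by (simp add: quad_form_scaleR power_divide)
      finally show ?thesis
        using False by (simp add: field_simps)
    qed simp
    ultimately show ?thesis
      by (rule that)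
  qed
qed

lemma norm_le_bnorm: "\<exists>K>0. \<forall>h\<in>blkspace blk i. norm h \<le> K * bnorm blk eucl B i h"
proof (cases "eucl i")
  case False
  have "norm h \<le> 1 * bnorm blk eucl B i h" if "h \<in> blkspace blk i" for h
  proof -
    have "norm h \<le> (\<Sum>c\<in>UNIV. \<bar>h $ c\<bar>)"
      by (rule norm_le_l1_cart)
    also have "\<dots> = (\<Sum>c\<in>UNIV. if blk c = i then \<bar>h $ c\<bar> else 0)"
      using that by (intro sum.cong) (auto simp: blkspace_def)
    also have "\<dots> = bnorm blk eucl B i h"
      using False by (simp add: bnorm_entropy sum.If_cases Int_def)
    finally show ?thesis
      by simp
  qed
  then show ?thesis
    by (intro exI[of _ 1]) auto
next
  case True
  obtain m where "m > 0" and m: "\<And>h. h \<in> blkspace blk i \<Longrightarrow> m * (norm h)\<^sup>2 \<le> quad_form blk B i h"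
    using quad_form_ge_sq_norm[OF True] by blast
  have "norm h \<le> (1 / sqrt m) * bnorm blk eucl B i h" if "h \<in> blkspace blk i" for h
  proof -
    have "sqrt (m * (norm h)\<^sup>2) \<le> sqrt (quad_form blk B i h)"
      using m[OF that] by simp
    then have "sqrt m * norm h \<le> bnorm blk eucl B i h"
      using True by (simp add: real_sqrt_mult bnorm_eucl)
    then show ?thesis
      using \<open>m > 0\<close> by (simp add: field_simps)
  qed
  moreover have "1 / sqrt m > 0"
    using \<open>m > 0\<close> by simp
  ultimately show ?thesis
    by blast
qed

lemma bdd_above_dnorm_set:
  "bdd_above {blockpart blk i g \<bullet> h | h. h \<in> blkspace blk i \<and> bnorm blk eucl B i h \<le> 1}"
proof -
  obtain K where K: "K > 0" "\<forall>h\<in>blkspace blk i. norm h \<le> K * bnorm blk eucl B i h"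
    using norm_le_bnorm by blast
  have "blockpart blk i g \<bullet> h \<le> norm (blockpart blk i g) * K"
    if "h \<in> blkspace blk i" "bnorm blk eucl B i h \<le> 1" for h
  proof -
    have "norm h \<le> K"
      using K that by (smt (verit) mult_left_le)
    then have "norm (blockpart blk i g) * norm h \<le> norm (blockpart blk i g) * K"
      by (simp add: mult_left_mono)
    then show ?thesis
      using norm_cauchy_schwarz order_trans by blast
  qed
  then show ?thesis
    unfolding bdd_above_def by blast
qed

lemma inner_le_dnorm_bnorm: "blockpart blk i g \<bullet> h \<le> dnorm blk eucl B i g * bnorm blk eucl B i h"
proof -
  define h' where "h' = blockpart blk i h"
  have inner_eq: "blockpart blk i g \<bullet> h = blockpart blk i g \<bullet> h'"
    unfolding h'_def by (rule inner_blockpart_both)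
  have norm_eq: "bnorm blk eucl B i h = bnorm blk eucl B i h'"
    unfolding h'_def by (simp add: bnorm_blockpart)
  have h': "h' \<in> blkspace blk i"
    unfolding h'_def by (rule blockpart_in_blkspace)
  show ?thesis
  proof (cases "bnorm blk eucl B i h' = 0")
    case True
    then have "h' = 0"
      using bnorm_eq_0_imp[of i h'] blockpart_of_blkspace[OF h'] by simp
    then show ?thesis
      using inner_eq norm_eq True by simp
  next
    case False
    define b where "b = bnorm blk eucl B i h'"
    have "b > 0"
      using False bnorm_nonneg[of i h'] b_def by simp
    have "bnorm blk eucl B i ((1 / b) *\<^sub>R h') = 1"
      using \<open>b > 0\<close> by (simp add: bnorm_scaleR b_def)
    then have "blockpart blk i g \<bullet> ((1 / b) *\<^sub>R h')
               \<in> {blockpart blk i g \<bullet> h | h. h \<in> blkspace blk i \<and> bnorm blk eucl B i h \<le> 1}"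
      using h' blkspace_scaleR by fastforce
    then have "blockpart blk i g \<bullet> ((1 / b) *\<^sub>R h') \<le> dnorm blk eucl B i g"
      unfolding dnorm_def by (intro cSup_upper bdd_above_dnorm_set)
    then have "blockpart blk i g \<bullet> h' \<le> dnorm blk eucl B i g * b"
      using \<open>b > 0\<close> by (simp add: field_simps)
    then show ?thesis
      using inner_eq norm_eq b_def by simp
  qed
qed

lemma dnorm_nonneg: "dnorm blk eucl B i g \<ge> 0"
proof -
  have "blockpart blk i g \<bullet> 0 \<le> dnorm blk eucl B i g"
    unfolding dnorm_def
    by (intro cSup_upper bdd_above_dnorm_set) (auto intro!: exI[of _ 0] simp: blkspace_def)
  then show ?thesis
    by simp
qed

lemma mem_Q_iff: "x \<in> Q \<longleftrightarrow> (\<forall>i. blockpart blk i x \<in> Qblk blk eucl QE i)"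
  by (simp add: Qprod_def)

lemma Q_entropy_block:
  assumes "x \<in> Q" "\<not> eucl i"
  shows "\<forall>c. blk c = i \<longrightarrow> x $ c \<ge> 0" "(\<Sum>c\<in>{c. blk c = i}. x $ c) = 1"
proof -
  have "blockpart blk i x \<in> Qblk blk eucl QE i"
    using assms(1) mem_Q_iff by blast
  then have "blockpart blk i x \<in> simplex_blk blk i"
    using assms(2) by (simp add: Qblk_def)
  then have nonneg: "\<forall>c. blockpart blk i x $ c \<ge> 0"
    and sum: "(\<Sum>c\<in>{c. blk c = i}. blockpart blk i x $ c) = 1"
    by (auto simp: simplex_blk_def)
  show "\<forall>c. blk c = i \<longrightarrow> x $ c \<ge> 0"
  proof (intro allI impI)
    fix c assume "blk c = i"
    then show "x $ c \<ge> 0"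
      using nonneg by (metis blockpart_nth)
  qed
  show "(\<Sum>c\<in>{c. blk c = i}. x $ c) = 1"
    using sum by simp
qed

lemma convex_simplex_blk: "convex (simplex_blk blk i)"
  unfolding convex_def simplex_blk_def blkspace_def
  by (auto simp: sum.distrib sum_distrib_left[symmetric])

lemma convex_Q: "convex Q"
proof (rule convexI)
  fix x y u v assume "x \<in> Q" "y \<in> Q" "0 \<le> u" "0 \<le> v" "u + v = (1::real)"
  moreover have "convex (Qblk blk eucl QE i)" for i
    using convex_QE convex_simplex_blk by (auto simp: Qblk_def)
  ultimately show "u *\<^sub>R x + v *\<^sub>R y \<in> Q"
    unfolding mem_Q_iff convex_def by (simp add: blockpart_add blockpart_scaleR)
qed

lemma segment_in_Q: "u \<in> Q \<Longrightarrow> z \<in> Q \<Longrightarrow> 0 \<le> t \<Longrightarrow> t \<le> 1 \<Longrightarrow> u + t *\<^sub>R (z - u) \<in> Q"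
  using convexD[OF convex_Q, of u z "1 - t" t] by (simp add: algebra_simps)

lemma replace_block_in_Q:
  "z \<in> Q \<Longrightarrow> blockpart blk i w \<in> Qblk blk eucl QE i \<Longrightarrow> replace_block blk i z w \<in> Q"
  by (auto simp: mem_Q_iff blockpart_replace_block)

text \<open>The prox centres have to stay in the relative interior of the entropy blocks, where the
  logarithms in the divergence are finite.\<close>

definition entropy_pos :: "real^'c \<Rightarrow> bool" where
  "entropy_pos z \<longleftrightarrow> (\<forall>c. \<not> eucl (blk c) \<longrightarrow> z $ c > 0)"

lemma Vblk_cong:
  assumes "\<And>c. blk c = i \<Longrightarrow> z $ c = z' $ c" "\<And>c. blk c = i \<Longrightarrow> x $ c = x' $ c"
  shows "Vblk blk eucl B i z x = Vblk blk eucl B i z' x'"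
proof -
  have "blockpart blk i (x - z) = blockpart blk i (x' - z')"
    using assms by (simp add: vec_eq_iff)
  moreover have "(\<Sum>c\<in>{c. blk c = i}. x $ c * ln (x $ c / z $ c))
                 = (\<Sum>c\<in>{c. blk c = i}. x' $ c * ln (x' $ c / z' $ c))"
    using assms by (intro sum.cong) auto
  ultimately show ?thesis
    unfolding Vblk_def by simp
qed

lemma Vblk_self [simp]: "Vblk blk eucl B i z z = 0"
  by (cases "eucl i") (auto simp: Vblk_def intro!: sum.neutral)

lemma Vblk_eucl: "eucl i \<Longrightarrow> Vblk blk eucl B i z x = quad_form blk B i (x - z) / 2"
  by (simp add: Vblk_def bnorm_blockpart bnorm_eucl quad_form_nonneg)

lemma Vblk_entropy:
  "\<not> eucl i \<Longrightarrow> Vblk blk eucl B i z x = (\<Sum>c\<in>{c. blk c = i}. x $ c * ln (x $ c / z $ c))"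
  by (simp add: Vblk_def)

lemma Vblk_ge_sq_bnorm:
  assumes "x \<in> Q" "z \<in> Q" "entropy_pos z"
  shows "Vblk blk eucl B i z x \<ge> (bnorm blk eucl B i (x - z))\<^sup>2 / 2"
proof (cases "eucl i")
  case True
  then show ?thesis
    by (simp add: Vblk_eucl bnorm_eucl quad_form_nonneg)
next
  case False
  have "(\<Sum>c\<in>{c. blk c = i}. \<bar>x $ c - z $ c\<bar>)\<^sup>2 \<le> 2 * (\<Sum>c\<in>{c. blk c = i}. x $ c * ln (x $ c / z $ c))"
    using Q_entropy_block[OF assms(1) False] Q_entropy_block[OF assms(2) False] assms(3) False
    by (intro pinsker_inequality) (auto simp: entropy_pos_def)
  then show ?thesis
    using False by (simp add: Vblk_entropy bnorm_entropy)
qed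

lemma Vblk_nonneg: "x \<in> Q \<Longrightarrow> z \<in> Q \<Longrightarrow> entropy_pos z \<Longrightarrow> Vblk blk eucl B i z x \<ge> 0"
  by (rule order_trans[OF _ Vblk_ge_sq_bnorm]) auto

lemma Vfull_nonneg: "x \<in> Q \<Longrightarrow> z \<in> Q \<Longrightarrow> entropy_pos z \<Longrightarrow> V z x \<ge> 0"
  unfolding Vfull_def using L_pos Vblk_nonneg by (intro sum_nonneg) (simp add: less_imp_le)

lemma Vfull_ge_sq_bnorm:
  assumes "x \<in> Q" "z \<in> Q" "entropy_pos z"
  shows "V z x \<ge> L i * (bnorm blk eucl B i (x - z))\<^sup>2 / 2"
proof -
  have "L i * (bnorm blk eucl B i (x - z))\<^sup>2 / 2 \<le> L i * Vblk blk eucl B i z x"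
    using Vblk_ge_sq_bnorm[OF assms, of i] L_pos by (simp add: mult_left_mono)
  also have "\<dots> = (\<Sum>j\<in>{i}. L j * Vblk blk eucl B j z x)"
    by simp
  also have "\<dots> \<le> V z x"
    unfolding Vfull_def using L_pos Vblk_nonneg[OF assms]
    by (intro sum_mono2) (auto simp: less_imp_le)
  finally show ?thesis .
qed

lemma Vfull_replace_block:
  "V a (replace_block blk i z w) = V a z - L i * Vblk blk eucl B i a z + L i * Vblk blk eucl B i a w"
proof -
  have "Vblk blk eucl B j a (replace_block blk i z w)
        = (if j = i then Vblk blk eucl B i a w else Vblk blk eucl B j a z)" for j
  proof (cases "j = i")
    case True
    then show ?thesis
      by (simp, intro Vblk_cong) (auto simp: replace_block_nth)
  next
    case False
    then show ?thesis
      by (simp, intro Vblk_cong) (auto simp: replace_block_nth)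
  qed
  then have "V a (replace_block blk i z w)
     = (\<Sum>j\<in>UNIV. L j * Vblk blk eucl B j a z
          + (if j = i then L i * Vblk blk eucl B i a w - L i * Vblk blk eucl B i a z else 0))"
    unfolding Vfull_def by (intro sum.cong) auto
  then show ?thesis
    by (simp add: sum.distrib Vfull_def)
qed

end

section \<open>The prox step\<close>

lemma xlnx_ratio_diff:
  fixes y a u :: real
  assumes "y \<ge> 0" "a > 0" "u > 0"
  shows "y * ln (y / a) - y * ln (y / u) = y * (ln u - ln a)"
proof (cases "y = 0")
  case False
  then show ?thesis
    using assms by (simp add: ln_div algebra_simps)
qed simp

lemma xlnx_ratio_le:
  fixes y u :: real
  assumes "y \<ge> 0" "u > 0"
  shows "y * ln (y / u) \<le> (y - u)\<^sup>2 / u + (y - u)"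
proof (cases "y = 0")
  case True
  then show ?thesis
    using assms by (simp add: power2_eq_square)
next
  case False
  with assms have "y > 0"
    by simp
  then have "y * ln (y / u) \<le> y * (y / u - 1)"
    using assms by (intro mult_left_mono ln_le_minus_one) auto
  also have "\<dots> = (y - u)\<^sup>2 / u + (y - u)"
    using assms by (simp add: field_simps power2_eq_square)
  finally show ?thesis .
qed

lemma nonneg_if_perturbations_nonneg:
  fixes C X :: real
  assumes "\<And>t. 0 < t \<Longrightarrow> t \<le> 1 \<Longrightarrow> 0 \<le> t * C + X"
  shows "0 \<le> X"
proof -
  have "((\<lambda>t. t * C + X) \<longlongrightarrow> 0 * C + X) (at_right 0)"
    by (intro tendsto_intros)
  moreover have "eventually (\<lambda>t. t \<in> {0<..<1}) (at_right (0::real))"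
    by (rule eventually_at_right_real) simp
  then have "eventually (\<lambda>t. 0 \<le> t * C + X) (at_right 0)"
    by eventually_elim (use assms in auto)
  ultimately show ?thesis
    using tendsto_lowerbound by fastforce
qed

context block_setup
begin

lemma Vblk_entropy_diff:
  assumes "y \<in> Q" "entropy_pos a" "entropy_pos u" "\<not> eucl i"
  shows "Vblk blk eucl B i a y - Vblk blk eucl B i u y
         = (\<Sum>c\<in>{c. blk c = i}. y $ c * (ln (u $ c) - ln (a $ c)))"
  unfolding Vblk_entropy[OF assms(4)] sum_subtractf[symmetric]
  using Q_entropy_block(1)[OF assms(1,4)] assms(2-4)
  by (intro sum.cong refl xlnx_ratio_diff) (auto simp: entropy_pos_def)

lemma Vblk_segment_quadratic:
  assumes "u \<in> Q" "z \<in> Q" "entropy_pos u"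
  shows "\<exists>C. \<forall>t. 0 \<le> t \<and> t \<le> 1 \<longrightarrow> Vblk blk eucl B i u (u + t *\<^sub>R (z - u)) \<le> t\<^sup>2 * C"
proof (cases "eucl i")
  case True
  then show ?thesis
    by (intro exI[of _ "quad_form blk B i (z - u) / 2"]) (auto simp: Vblk_eucl quad_form_scaleR)
next
  case False
  have "Vblk blk eucl B i u (u + t *\<^sub>R (z - u)) \<le> t\<^sup>2 * (\<Sum>c\<in>{c. blk c = i}. (z $ c - u $ c)\<^sup>2 / u $ c)"
    if t: "0 \<le> t" "t \<le> 1" for t
  proof -
    define y where "y = u + t *\<^sub>R (z - u)"
    have y: "y \<in> Q"
      unfolding y_def using assms t by (intro segment_in_Q)
    have "Vblk blk eucl B i u y \<le> (\<Sum>c\<in>{c. blk c = i}. (y $ c - u $ c)\<^sup>2 / u $ c + (y $ c - u $ c))"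
      unfolding Vblk_entropy[OF False] using Q_entropy_block(1)[OF y False] assms(3) False
      by (intro sum_mono xlnx_ratio_le) (auto simp: entropy_pos_def)
    also have "\<dots> = (\<Sum>c\<in>{c. blk c = i}. (y $ c - u $ c)\<^sup>2 / u $ c)"
      using Q_entropy_block(2)[OF y False] Q_entropy_block(2)[OF assms(1) False]
      by (simp add: sum.distrib sum_subtractf)
    also have "\<dots> = t\<^sup>2 * (\<Sum>c\<in>{c. blk c = i}. (z $ c - u $ c)\<^sup>2 / u $ c)"
      by (auto simp: y_def sum_distrib_left power2_eq_square algebra_simps intro!: sum.cong)
    finally show ?thesis
      by (simp add: y_def)
  qed
  then show ?thesis
    by blast
qed

text \<open>Along a segment starting at \<open>u\<close>, the difference of the divergences from \<open>a\<close> and from \<open>u\<close>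
  is affine in the parameter: it is a quadratic form difference on Euclidean blocks and a
  linear function on entropy blocks.\<close>

lemma Vblk_diff_segment:
  assumes "u \<in> Q" "z \<in> Q" "a \<in> Q" "entropy_pos a" "entropy_pos u" "0 \<le> t" "t \<le> 1"
  shows "Vblk blk eucl B i a (u + t *\<^sub>R (z - u)) - Vblk blk eucl B i u (u + t *\<^sub>R (z - u))
         = Vblk blk eucl B i a u
           + t * ((Vblk blk eucl B i a z - Vblk blk eucl B i u z) - Vblk blk eucl B i a u)"
proof (cases "eucl i")
  case True
  have sym: "\<forall>c d. B i c d = B i d c"
    using B_sym[OF True] by blast
  have zt_a: "u + t *\<^sub>R (z - u) - a = (u - a) + t *\<^sub>R (z - u)"
    and zt_u: "u + t *\<^sub>R (z - u) - u = t *\<^sub>R (z - u)"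
    and z_a: "z - a = (u - a) + 1 *\<^sub>R (z - u)"
    by (simp_all add: algebra_simps)
  show ?thesis
    unfolding Vblk_eucl[OF True] zt_a zt_u
    by (subst z_a, simp only: quad_form_add_scaleR[where B = B and i = i, OF sym] quad_form_scaleR,
        simp add: field_simps)
next
  case False
  define K where "K c = ln (u $ c) - ln (a $ c)" for c
  have "u + t *\<^sub>R (z - u) \<in> Q"
    using assms by (intro segment_in_Q)
  then have "Vblk blk eucl B i a (u + t *\<^sub>R (z - u)) - Vblk blk eucl B i u (u + t *\<^sub>R (z - u))
     = (\<Sum>c\<in>{c. blk c = i}. (u + t *\<^sub>R (z - u)) $ c * K c)"
    unfolding K_def using assms(4,5) False by (rule Vblk_entropy_diff)
  also have "\<dots> = (\<Sum>c\<in>{c. blk c = i}. u $ c * K c)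
      + t * ((\<Sum>c\<in>{c. blk c = i}. z $ c * K c) - (\<Sum>c\<in>{c. blk c = i}. u $ c * K c))"
    by (simp add: algebra_simps sum.distrib sum_subtractf sum_distrib_left)
  also have "\<dots> = Vblk blk eucl B i a u
      + t * ((Vblk blk eucl B i a z - Vblk blk eucl B i u z) - Vblk blk eucl B i a u)"
    using Vblk_entropy_diff[OF assms(1,4,5) False] Vblk_entropy_diff[OF assms(2,4,5) False]
    unfolding K_def by simp
  finally show ?thesis .
qed

lemma Vfull_diff_segment:
  assumes "u \<in> Q" "z \<in> Q" "a \<in> Q" "entropy_pos a" "entropy_pos u" "0 \<le> t" "t \<le> 1"
  shows "V a (u + t *\<^sub>R (z - u)) - V u (u + t *\<^sub>R (z - u)) = V a u + t * ((V a z - V u z) - V a u)"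
proof -
  have "V a (u + t *\<^sub>R (z - u)) - V u (u + t *\<^sub>R (z - u))
        = (\<Sum>i\<in>UNIV. L i * (Vblk blk eucl B i a (u + t *\<^sub>R (z - u))
                               - Vblk blk eucl B i u (u + t *\<^sub>R (z - u))))"
    by (simp add: Vfull_def sum_subtractf algebra_simps)
  also have "\<dots> = (\<Sum>i\<in>UNIV. L i * Vblk blk eucl B i a u
      + t * (L i * (Vblk blk eucl B i a z - Vblk blk eucl B i u z) - L i * Vblk blk eucl B i a u))"
    unfolding Vblk_diff_segment[OF assms] by (simp add: algebra_simps)
  also have "\<dots> = V a u + t * ((V a z - V u z) - V a u)"
    by (simp add: Vfull_def sum.distrib sum_subtractf sum_distrib_left algebra_simps)
  finally show ?thesis .
qed

lemma Vfull_segment_quadratic: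
  assumes "u \<in> Q" "z \<in> Q" "entropy_pos u"
  obtains C where "\<And>t. 0 \<le> t \<Longrightarrow> t \<le> 1 \<Longrightarrow> V u (u + t *\<^sub>R (z - u)) \<le> t\<^sup>2 * C"
proof -
  obtain C where C: "\<And>i t. 0 \<le> t \<Longrightarrow> t \<le> 1 \<Longrightarrow> Vblk blk eucl B i u (u + t *\<^sub>R (z - u)) \<le> t\<^sup>2 * C i"
    using Vblk_segment_quadratic[OF assms] by metis
  have "V u (u + t *\<^sub>R (z - u)) \<le> t\<^sup>2 * (\<Sum>i\<in>UNIV. L i * C i)" if "0 \<le> t" "t \<le> 1" for t
  proof -
    have "V u (u + t *\<^sub>R (z - u)) \<le> (\<Sum>i\<in>UNIV. L i * (t\<^sup>2 * C i))"
      unfolding Vfull_def using L_pos C that by (intro sum_mono mult_left_mono) (auto simp: less_imp_le)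
    then show ?thesis
      by (simp add: sum_distrib_left algebra_simps)
  qed
  then show ?thesis
    using that by blast
qed

definition prox_point :: "real^'c \<Rightarrow> real^'c \<Rightarrow> real^'c \<Rightarrow> bool" where
  "prox_point a G u \<longleftrightarrow> u \<in> Q \<and> (\<forall>z\<in>Q. V a u + G \<bullet> u \<le> V a z + G \<bullet> z)"

lemma prox_point_in_Q: "prox_point a G u \<Longrightarrow> u \<in> Q"
  by (simp add: prox_point_def)

text \<open>The first-order optimality condition, obtained by comparing \<open>u\<close> with the points of the
  segment from \<open>u\<close> to \<open>z\<close>.\<close>

lemma prox_three_point:
  assumes "a \<in> Q" "entropy_pos a" "entropy_pos u" "prox_point a G u" "z \<in> Q"
  shows "V u z \<le> V a z - V a u + G \<bullet> (z - u)"
proof -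
  have u: "u \<in> Q"
    using assms(4) by (rule prox_point_in_Q)
  obtain C where C: "\<And>t. 0 \<le> t \<Longrightarrow> t \<le> 1 \<Longrightarrow> V u (u + t *\<^sub>R (z - u)) \<le> t\<^sup>2 * C"
    using Vfull_segment_quadratic[OF u assms(5,3)] by blast
  define X where "X = (V a z - V u z) - V a u + G \<bullet> (z - u)"
  have "0 \<le> t * C + X" if t: "0 < t" "t \<le> 1" for t
  proof -
    define zt where "zt = u + t *\<^sub>R (z - u)"
    have "zt \<in> Q"
      unfolding zt_def using u assms(5) t by (intro segment_in_Q) auto
    then have "V a u + G \<bullet> u \<le> V a zt + G \<bullet> zt"
      using assms(4) by (simp add: prox_point_def)
    moreover have "V a zt - V u zt = V a u + t * ((V a z - V u z) - V a u)"
      unfolding zt_def using u assms t by (intro Vfull_diff_segment) auto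
    moreover have "G \<bullet> zt = G \<bullet> u + t * (G \<bullet> (z - u))"
      by (simp add: zt_def inner_add_right)
    ultimately have "0 \<le> t\<^sup>2 * C + t * X"
      using C[of t] t unfolding X_def zt_def by (simp add: algebra_simps)
    then have "0 \<le> t * (t * C + X)"
      by (simp add: power2_eq_square algebra_simps)
    then show ?thesis
      using t by (simp add: zero_le_mult_iff)
  qed
  then have "0 \<le> X"
    by (rule nonneg_if_perturbations_nonneg)
  then show ?thesis
    unfolding X_def by simp
qed

lemma prox_block_min:
  assumes "prox_point a G u" "blockpart blk i w \<in> Qblk blk eucl QE i"
  shows "L i * Vblk blk eucl B i a u + blockpart blk i G \<bullet> u
         \<le> L i * Vblk blk eucl B i a w + blockpart blk i G \<bullet> w"
proof -
  have "replace_block blk i u w \<in> Q"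
    using prox_point_in_Q[OF assms(1)] assms(2) by (rule replace_block_in_Q)
  then have "V a u + G \<bullet> u \<le> V a (replace_block blk i u w) + G \<bullet> replace_block blk i u w"
    using assms(1) by (simp add: prox_point_def)
  then show ?thesis
    by (simp add: Vfull_replace_block inner_replace_block)
qed

lemma prox_other_blocks:
  assumes "a \<in> Q" "entropy_pos a" "prox_point a G u" "blockpart blk i G = 0"
  shows "blockpart blk i u = blockpart blk i a"
proof -
  have "blockpart blk i a \<in> Qblk blk eucl QE i"
    using assms(1) mem_Q_iff by blast
  from prox_block_min[OF assms(3) this] assms(4)
  have "L i * Vblk blk eucl B i a u \<le> 0"
    by simp
  then have "Vblk blk eucl B i a u \<le> 0"
    using L_pos[of i] by (simp add: mult_le_0_iff)
  moreover have "Vblk blk eucl B i a u \<ge> (bnorm blk eucl B i (u - a))\<^sup>2 / 2"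
    using prox_point_in_Q[OF assms(3)] assms(1,2) by (rule Vblk_ge_sq_bnorm)
  ultimately have "(bnorm blk eucl B i (u - a))\<^sup>2 \<le> 0"
    by linarith
  then have "bnorm blk eucl B i (u - a) = 0"
    by simp
  then have "blockpart blk i (u - a) = 0"
    by (rule bnorm_eq_0_imp)
  then show ?thesis
    by (simp add: blockpart_diff)
qed

lemma entropy_prox_objective_eq_kl:
  assumes "\<not> eucl i" and a: "\<forall>c. blk c = i \<longrightarrow> a $ c > 0" and "Z > 0"
    and W: "\<forall>c. blk c = i \<longrightarrow> W $ c = a $ c * exp (- (G $ c) / L i) / Z"
    and x: "\<forall>c. blk c = i \<longrightarrow> x $ c \<ge> 0" "(\<Sum>c\<in>{c. blk c = i}. x $ c) = 1"
  shows "L i * Vblk blk eucl B i a x + blockpart blk i G \<bullet> x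
         = L i * (\<Sum>c\<in>{c. blk c = i}. x $ c * ln (x $ c / W $ c)) - L i * ln Z"
proof -
  have Li: "L i > 0"
    using L_pos by blast
  have summand: "x $ c * ln (x $ c / W $ c) = x $ c * ln (x $ c / a $ c) + x $ c * G $ c / L i + x $ c * ln Z"
    if c: "blk c = i" for c
  proof (cases "x $ c = 0")
    case False
    then have "x $ c > 0"
      using x(1) c by (simp add: less_le)
    then have "ln (x $ c / W $ c) = ln (x $ c / a $ c) + G $ c / L i + ln Z"
      using W[rule_format, OF c] a[rule_format, OF c] \<open>Z > 0\<close> by (simp add: ln_div ln_mult)
    then show ?thesis
      by (simp add: distrib_left)
  qed simp
  have "(\<Sum>c\<in>{c. blk c = i}. x $ c * ln (x $ c / W $ c))
        = Vblk blk eucl B i a x + (\<Sum>c\<in>{c. blk c = i}. G $ c * x $ c) / L i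
          + ln Z * (\<Sum>c\<in>{c. blk c = i}. x $ c)"
    using \<open>\<not> eucl i\<close>
    by (simp add: summand Vblk_entropy sum.distrib sum_divide_distrib[symmetric] sum_distrib_left mult.commute)
  then show ?thesis
    using Li x(2) by (simp add: inner_blockpart field_simps)
qed

lemma prox_entropy_pos:
  assumes "a \<in> Q" "entropy_pos a" "prox_point a G u"
  shows "entropy_pos u"
  unfolding entropy_pos_def
proof (intro allI impI)
  fix c0 assume ent: "\<not> eucl (blk c0)"
  define i where "i = blk c0"
  define S where "S = {c. blk c = i}"
  have u: "u \<in> Q"
    using assms(3) by (rule prox_point_in_Q)
  have a: "\<forall>c. blk c = i \<longrightarrow> a $ c > 0"
    using assms(2) ent by (auto simp: entropy_pos_def i_def)
  define e where "e c = a $ c * exp (- (G $ c) / L i)" for c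
  define Z where "Z = (\<Sum>c\<in>S. e c)"
  have "S \<noteq> {}"
    by (auto simp: S_def i_def)
  then have "Z > 0"
    unfolding Z_def using a by (intro sum_pos) (auto simp: e_def S_def)
  define W :: "real^'c" where "W = (\<chi> c. if blk c = i then e c / Z else 0)"
  have W_pos: "W $ c > 0" if "c \<in> S" for c
    using that a \<open>Z > 0\<close> by (simp add: W_def S_def e_def)
  have sum_W: "(\<Sum>c\<in>S. W $ c) = 1"
    using \<open>Z > 0\<close> by (simp add: W_def S_def Z_def sum_divide_distrib[symmetric])
  have "W \<in> simplex_blk blk i"
    using W_pos sum_W by (auto simp: simplex_blk_def blkspace_def S_def W_def less_imp_le)
  then have "blockpart blk i W \<in> Qblk blk eucl QE i"
    using ent by (simp add: Qblk_def i_def blockpart_of_blkspace simplex_blk_def)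
  from prox_block_min[OF assms(3) this]
  have "L i * (\<Sum>c\<in>S. u $ c * ln (u $ c / W $ c)) \<le> L i * (\<Sum>c\<in>S. W $ c * ln (W $ c / W $ c))"
    using entropy_prox_objective_eq_kl[OF _ a \<open>Z > 0\<close>, of W G u] Q_entropy_block[OF u]
      entropy_prox_objective_eq_kl[OF _ a \<open>Z > 0\<close>, of W G W] W_pos sum_W ent
    by (simp add: W_def e_def S_def i_def less_imp_le)
  moreover have "(\<Sum>c\<in>S. W $ c * ln (W $ c / W $ c)) = 0"
    using W_pos by (intro sum.neutral) auto
  ultimately have "(\<Sum>c\<in>S. u $ c * ln (u $ c / W $ c)) \<le> 0"
    using L_pos by (simp add: mult_le_cancel_left_pos)
  moreover have "(\<Sum>c\<in>S. \<bar>u $ c - W $ c\<bar>)\<^sup>2 \<le> 2 * (\<Sum>c\<in>S. u $ c * ln (u $ c / W $ c))"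
    using Q_entropy_block[OF u] ent W_pos sum_W by (intro pinsker_inequality) (auto simp: S_def i_def)
  ultimately have "(\<Sum>c\<in>S. \<bar>u $ c - W $ c\<bar>)\<^sup>2 \<le> 0"
    by linarith
  then have "(\<Sum>c\<in>S. \<bar>u $ c - W $ c\<bar>) = 0"
    by simp
  then have "u $ c0 = W $ c0"
    by (subst (asm) sum_nonneg_eq_0_iff) (auto simp: S_def i_def)
  then show "u $ c0 > 0"
    using W_pos by (simp add: S_def i_def)
qed

lemma prox_unique:
  assumes "a \<in> Q" "entropy_pos a" "prox_point a G u" "prox_point a G u'"
  shows "u' = u"
proof -
  have u: "u \<in> Q" and u': "u' \<in> Q"
    using assms(3,4) by (simp_all add: prox_point_in_Q)
  have ent: "entropy_pos u"
    using assms(1-3) by (rule prox_entropy_pos)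
  have "V u u' \<le> V a u' - V a u + G \<bullet> (u' - u)"
    using assms(1,2) ent assms(3) u' by (rule prox_three_point)
  also have "\<dots> \<le> 0"
  proof -
    have "V a u' + G \<bullet> u' \<le> V a u + G \<bullet> u"
      using assms(4) u unfolding prox_point_def by blast
    then show ?thesis
      by (simp add: inner_diff_right)
  qed
  finally have V0: "V u u' \<le> 0" .
  have "blockpart blk i (u' - u) = 0" for i
  proof -
    have "L i * (bnorm blk eucl B i (u' - u))\<^sup>2 / 2 \<le> 0"
      using Vfull_ge_sq_bnorm[OF u' u ent, of i] V0 by simp
    then have "(bnorm blk eucl B i (u' - u))\<^sup>2 \<le> 0"
      using L_pos[of i] by (simp add: mult_le_0_iff)
    then have "bnorm blk eucl B i (u' - u) = 0"
      by simp
    then show ?thesis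
      by (rule bnorm_eq_0_imp)
  qed
  then have "u' - u = 0"
    using sum_blockpart[of blk "u' - u"] by simp
  then show ?thesis
    by simp
qed

end

section \<open>Smooth convex functions\<close>

lemma has_real_derivative_along_line:
  fixes f :: "real^'c::finite \<Rightarrow> real"
  assumes "\<forall>z. (f has_derivative (\<lambda>h. grad z \<bullet> h)) (at z)"
  shows "((\<lambda>t. f (y + t *\<^sub>R w)) has_real_derivative grad (y + t *\<^sub>R w) \<bullet> w) (at t)"
proof -
  have "((\<lambda>t. y + t *\<^sub>R w) has_derivative (\<lambda>s. s *\<^sub>R w)) (at t)"
    by (auto intro!: derivative_eq_intros)
  from has_derivative_compose[OF this assms[rule_format, of "y + t *\<^sub>R w"]]
  have "((\<lambda>t. f (y + t *\<^sub>R w)) has_derivative (\<lambda>s. grad (y + t *\<^sub>R w) \<bullet> (s *\<^sub>R w))) (at t)"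
    by (simp add: o_def)
  moreover have "(\<lambda>s. grad (y + t *\<^sub>R w) \<bullet> (s *\<^sub>R w)) = (*) (grad (y + t *\<^sub>R w) \<bullet> w)"
    by (auto simp: fun_eq_iff)
  ultimately show ?thesis
    by (simp add: has_field_derivative_def)
qed

lemma convex_gradient_inequality:
  fixes f :: "real^'c::finite \<Rightarrow> real"
  assumes "convex_on UNIV f" and "\<forall>z. (f has_derivative (\<lambda>h. grad z \<bullet> h)) (at z)"
  shows "f z \<ge> f y + grad y \<bullet> (z - y)"
proof -
  define \<psi> where "\<psi> t = f (y + t *\<^sub>R (z - y))" for t :: real
  have "convex_on UNIV \<psi>"
  proof (rule convex_onI)
    fix t x1 x2 :: real assume t: "0 < t" "t < 1"
    have "y + ((1 - t) *\<^sub>R x1 + t *\<^sub>R x2) *\<^sub>R (z - y)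
          = (1 - t) *\<^sub>R (y + x1 *\<^sub>R (z - y)) + t *\<^sub>R (y + x2 *\<^sub>R (z - y))"
      by (simp add: algebra_simps)
    then show "\<psi> ((1 - t) *\<^sub>R x1 + t *\<^sub>R x2) \<le> (1 - t) * \<psi> x1 + t * \<psi> x2"
      unfolding \<psi>_def using convex_onD[OF assms(1), of t] t by simp
  qed simp
  moreover have "(\<psi> has_field_derivative grad y \<bullet> (z - y)) (at 0 within UNIV)"
    unfolding \<psi>_def using has_real_derivative_along_line[OF assms(2), of y "z - y" 0] by simp
  ultimately have "\<psi> 1 - \<psi> 0 \<ge> (grad y \<bullet> (z - y)) * (1 - 0)"
    by (intro convex_on_imp_above_tangent) auto
  then show ?thesis
    by (simp add: \<psi>_def)
qed

context block_setup
begin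

lemma block_descent:
  fixes f :: "real^'c \<Rightarrow> real"
  assumes f: "\<forall>z. (f has_derivative (\<lambda>h. grad z \<bullet> h)) (at z)"
    and lipschitz: "\<forall>i z h. z \<in> Q \<and> h \<in> blkspace blk i \<and> z + h \<in> Q \<longrightarrow>
                      dnorm blk eucl B i (grad (z + h) - grad z) \<le> L i * bnorm blk eucl B i h"
    and "z \<in> Q" "z + h \<in> Q" and h: "h \<in> blkspace blk i"
  shows "f (z + h) \<le> f z + grad z \<bullet> h + L i / 2 * (bnorm blk eucl B i h)\<^sup>2"
proof -
  define b where "b = bnorm blk eucl B i h"
  define \<phi> where "\<phi> t = f (z + t *\<^sub>R h) - t * (grad z \<bullet> h) - L i * t\<^sup>2 * b\<^sup>2 / 2" for t
  have deriv: "(\<phi> has_real_derivative grad (z + t *\<^sub>R h) \<bullet> h - grad z \<bullet> h - L i * t * b\<^sup>2) (at t)" for t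
    unfolding \<phi>_def
    by (rule derivative_eq_intros has_real_derivative_along_line[OF f] refl | simp add: power2_eq_square)+
  have deriv_nonpos: "grad (z + t *\<^sub>R h) \<bullet> h - grad z \<bullet> h - L i * t * b\<^sup>2 \<le> 0" if t: "0 < t" "t < 1" for t
  proof -
    have "z + t *\<^sub>R h = z + t *\<^sub>R ((z + h) - z)"
      by simp
    then have "z + t *\<^sub>R h \<in> Q"
      using segment_in_Q[OF \<open>z \<in> Q\<close> \<open>z + h \<in> Q\<close>, of t] t by simp
    then have "dnorm blk eucl B i (grad (z + t *\<^sub>R h) - grad z) \<le> L i * bnorm blk eucl B i (t *\<^sub>R h)"
      using lipschitz \<open>z \<in> Q\<close> blkspace_scaleR[OF h, of t] by blast
    also have "\<dots> = L i * t * b"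
      using t by (simp add: bnorm_scaleR b_def)
    finally have dn: "dnorm blk eucl B i (grad (z + t *\<^sub>R h) - grad z) \<le> L i * t * b" .
    have "grad (z + t *\<^sub>R h) \<bullet> h - grad z \<bullet> h = blockpart blk i (grad (z + t *\<^sub>R h) - grad z) \<bullet> h"
      using blockpart_of_blkspace[OF h] by (simp add: inner_blockpart_swap inner_diff_left)
    also have "\<dots> \<le> dnorm blk eucl B i (grad (z + t *\<^sub>R h) - grad z) * b"
      unfolding b_def by (rule inner_le_dnorm_bnorm)
    also have "\<dots> \<le> L i * t * b * b"
      using dn bnorm_nonneg[of i h] by (intro mult_right_mono) (auto simp: b_def)
    finally show ?thesis
      by (simp add: power2_eq_square)
  qed
  have "continuous_on {0..1} \<phi>"
    using deriv by (intro continuous_at_imp_continuous_on ballI DERIV_isCont) blast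
  have "\<phi> 1 \<le> \<phi> 0"
  proof (rule DERIV_nonpos_imp_decreasing_open[of 0 1 \<phi>])
    fix t :: real assume "0 < t" "t < 1"
    then show "\<exists>y. (\<phi> has_real_derivative y) (at t) \<and> y \<le> 0"
      using deriv[of t] deriv_nonpos[of t] by blast
  qed (use \<open>continuous_on {0..1} \<phi>\<close> in auto)
  then show ?thesis
    by (simp add: \<phi>_def b_def)
qed

end

section \<open>The step sizes\<close>

definition largest_root :: "real \<Rightarrow> real \<Rightarrow> real" where
  "largest_root \<rho> A = (1 + sqrt (1 + 4 * \<rho>\<^sup>2 * A)) / (2 * \<rho>\<^sup>2)"

lemma largest_root_eq:
  assumes "\<rho> \<ge> 1" "A \<ge> 0"
  shows "A + largest_root \<rho> A = \<rho>\<^sup>2 * (largest_root \<rho> A)\<^sup>2"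
proof -
  define s where "s = sqrt (1 + 4 * \<rho>\<^sup>2 * A)"
  have s2: "s\<^sup>2 = 1 + 4 * \<rho>\<^sup>2 * A"
    using assms by (simp add: s_def)
  have "\<rho>\<^sup>2 * (largest_root \<rho> A)\<^sup>2 = (1 + 2 * s + s\<^sup>2) / (4 * \<rho>\<^sup>2)"
    using assms by (simp add: largest_root_def s_def power_divide field_simps power2_eq_square)
  also have "\<dots> = A + largest_root \<rho> A"
    unfolding s2 using assms by (simp add: largest_root_def s_def field_simps power2_eq_square)
  finally show ?thesis
    by simp
qed

lemma largest_root_nonneg: "\<rho> \<ge> 1 \<Longrightarrow> A \<ge> 0 \<Longrightarrow> largest_root \<rho> A \<ge> 0"
  unfolding largest_root_def by (intro divide_nonneg_nonneg add_nonneg_nonneg) auto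

lemma Greatest_root_eq_largest_root:
  assumes "\<rho> \<ge> 1" "A \<ge> 0"
  shows "(GREATEST a. A + a = \<rho>\<^sup>2 * a\<^sup>2) = largest_root \<rho> A"
proof (rule Greatest_equality)
  show "A + largest_root \<rho> A = \<rho>\<^sup>2 * (largest_root \<rho> A)\<^sup>2"
    using assms by (rule largest_root_eq)
next
  fix y assume y: "A + y = \<rho>\<^sup>2 * y\<^sup>2"
  have "(2 * \<rho>\<^sup>2 * y - 1)\<^sup>2 = 4 * \<rho>\<^sup>2 * (\<rho>\<^sup>2 * y\<^sup>2) - 4 * \<rho>\<^sup>2 * y + 1"
    by (simp add: power2_eq_square algebra_simps)
  also have "\<dots> = 1 + 4 * \<rho>\<^sup>2 * A"
    unfolding y[symmetric] by (simp add: algebra_simps)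
  finally have "2 * \<rho>\<^sup>2 * y - 1 \<le> sqrt (1 + 4 * \<rho>\<^sup>2 * A)"
    by (metis real_sqrt_abs abs_ge_self)
  then show "y \<le> largest_root \<rho> A"
    using assms by (simp add: largest_root_def field_simps)
qed

declare rstm_A.simps(2) [simp del] rstm_alpha.simps(2) [simp del]

locale rstm_steps =
  fixes \<rho> :: real
  assumes rho_ge_1: "\<rho> \<ge> 1"
begin

abbreviation "A \<equiv> rstm_A \<rho>"
abbreviation "\<alpha> \<equiv> rstm_alpha \<rho>"

lemma A_nonneg: "A k \<ge> 0"
proof (induction k)
  case 0
  then show ?case
    using rho_ge_1 by (simp add: field_simps)
next
  case (Suc k)
  then show ?case
    using largest_root_nonneg[OF rho_ge_1 Suc] Greatest_root_eq_largest_root[OF rho_ge_1 Suc]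
    by (simp add: rstm_A.simps(2))
qed

lemma alpha_Suc: "\<alpha> (Suc k) = largest_root \<rho> (A k)"
  using Greatest_root_eq_largest_root[OF rho_ge_1 A_nonneg] by (simp add: rstm_alpha.simps(2))

lemma A_Suc: "A (Suc k) = A k + \<alpha> (Suc k)"
  by (simp add: rstm_A.simps(2) rstm_alpha.simps(2))

lemma A_Suc_eq: "A (Suc k) = \<rho>\<^sup>2 * (\<alpha> (Suc k))\<^sup>2"
  using largest_root_eq[OF rho_ge_1 A_nonneg[of k]] by (simp add: A_Suc alpha_Suc)

lemma A_0_le: "A 0 \<le> A k"
proof (induction k)
  case (Suc k)
  then show ?case
    using largest_root_nonneg[OF rho_ge_1 A_nonneg[of k]] by (simp add: A_Suc alpha_Suc)
qed simp

lemma alpha_1: "\<alpha> (Suc 0) = 1 / \<rho>"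
proof -
  have "1 + 4 * \<rho>\<^sup>2 * A 0 = (2 * \<rho> - 1)\<^sup>2"
    using rho_ge_1 by (simp add: field_simps power2_eq_square)
  then have "sqrt (1 + 4 * \<rho>\<^sup>2 * A 0) = 2 * \<rho> - 1"
    using rho_ge_1 by simp
  then show ?thesis
    using rho_ge_1 unfolding alpha_Suc largest_root_def by (simp add: field_simps power2_eq_square)
qed

lemma A_1: "A (Suc 0) = 1"
  using rho_ge_1 by (simp add: A_Suc alpha_1 field_simps)

lemma rho_alpha_ge_1: "\<rho> * \<alpha> (Suc k) \<ge> 1"
proof -
  have "4 * \<rho>\<^sup>2 * A 0 \<le> 4 * \<rho>\<^sup>2 * A k"
    using A_0_le by (intro mult_left_mono) auto
  moreover have "4 * \<rho>\<^sup>2 * A 0 = (2 * \<rho> - 1)\<^sup>2 - 1"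
    using rho_ge_1 by (simp add: field_simps power2_eq_square)
  ultimately have "sqrt ((2 * \<rho> - 1)\<^sup>2) \<le> sqrt (1 + 4 * \<rho>\<^sup>2 * A k)"
    by (intro real_sqrt_le_mono) simp
  then have "sqrt (1 + 4 * \<rho>\<^sup>2 * A k) \<ge> 2 * \<rho> - 1"
    using rho_ge_1 by simp
  then have "\<alpha> (Suc k) \<ge> (2 * \<rho>) / (2 * \<rho>\<^sup>2)"
    using rho_ge_1 unfolding alpha_Suc largest_root_def by (intro divide_right_mono) auto
  then show ?thesis
    using rho_ge_1 by (simp add: field_simps power2_eq_square)
qed

lemma alpha_pos: "\<alpha> (Suc k) > 0"
  using zero_less_mult_pos[of \<rho> "\<alpha> (Suc k)"] rho_alpha_ge_1[of k] rho_ge_1 by linarith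

lemma A_pos: "A (Suc k) > 0"
  using A_nonneg[of k] alpha_pos[of k] by (simp add: A_Suc)

lemma A_mono: "m \<le> k \<Longrightarrow> A m \<le> A k"
proof (induction k)
  case (Suc k)
  then show ?case
    using alpha_pos[of k] A_Suc[of k] by (cases "m = Suc k") auto
qed simp

lemma sum_alpha: "(\<Sum>j\<in>{1..k}. \<alpha> j) = A k - A 0"
  by (induction k) (auto simp: A_Suc)

lemma alpha_Suc_Suc_le: "\<alpha> (Suc (Suc k)) \<le> \<alpha> (Suc k) + 1 / \<rho>\<^sup>2"
proof -
  have a: "\<alpha> (Suc k) \<ge> 0"
    using alpha_pos[of k] by simp
  have "1 + 4 * \<rho>\<^sup>2 * A (Suc k) = 1 + (2 * \<rho>\<^sup>2 * \<alpha> (Suc k))\<^sup>2"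
    by (simp add: A_Suc_eq power2_eq_square algebra_simps)
  also have "\<dots> \<le> (1 + 2 * \<rho>\<^sup>2 * \<alpha> (Suc k))\<^sup>2"
    using a rho_ge_1 by (simp add: power2_eq_square algebra_simps)
  finally have "sqrt (1 + 4 * \<rho>\<^sup>2 * A (Suc k)) \<le> 1 + 2 * \<rho>\<^sup>2 * \<alpha> (Suc k)"
    by (rule real_le_lsqrt[rotated]) (use a in \<open>intro add_nonneg_nonneg mult_nonneg_nonneg; simp\<close>)
  then have "\<alpha> (Suc (Suc k)) \<le> (2 + 2 * \<rho>\<^sup>2 * \<alpha> (Suc k)) / (2 * \<rho>\<^sup>2)"
    unfolding alpha_Suc[of "Suc k"] largest_root_def using rho_ge_1 by (intro divide_right_mono) auto
  then show ?thesis
    using rho_ge_1 by (simp add: field_simps power2_eq_square)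
qed

lemma alpha_ratio: "(\<rho> - 1) * \<alpha> (Suc (Suc k)) \<le> \<rho> * \<alpha> (Suc k)"
proof -
  have "(\<rho> - 1) * \<alpha> (Suc (Suc k)) \<le> (\<rho> - 1) * (\<alpha> (Suc k) + 1 / \<rho>\<^sup>2)"
    using alpha_Suc_Suc_le rho_ge_1 by (intro mult_left_mono) auto
  also have "\<dots> \<le> \<rho> * \<alpha> (Suc k)"
  proof -
    have "(\<rho> - 1) / \<rho>\<^sup>2 \<le> 1 / \<rho>"
      using rho_ge_1 by (simp add: field_simps power2_eq_square)
    also have "1 / \<rho> \<le> \<alpha> (Suc k)"
      using rho_alpha_ge_1[of k] rho_ge_1 by (simp add: field_simps)
    finally show ?thesis
      by (simp add: algebra_simps)
  qed
  finally show ?thesis .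
qed

lemma sqrt_A_Suc_ge: "sqrt (A (Suc k)) \<ge> sqrt (A k) + 1 / (2 * \<rho>)"
proof -
  have "sqrt (4 * \<rho>\<^sup>2 * A k) \<le> sqrt (1 + 4 * \<rho>\<^sup>2 * A k)"
    by simp
  moreover have "sqrt (4 * \<rho>\<^sup>2 * A k) = 2 * \<rho> * sqrt (A k)"
    using rho_ge_1 by (simp add: real_sqrt_mult)
  ultimately have "\<alpha> (Suc k) \<ge> (1 + 2 * \<rho> * sqrt (A k)) / (2 * \<rho>\<^sup>2)"
    unfolding alpha_Suc largest_root_def using rho_ge_1 by (intro divide_right_mono) auto
  moreover have "A k + (1 + 2 * \<rho> * sqrt (A k)) / (2 * \<rho>\<^sup>2) \<ge> (sqrt (A k) + 1 / (2 * \<rho>))\<^sup>2"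
    using rho_ge_1 A_nonneg[of k] by (simp add: power2_eq_square field_simps)
  ultimately have "(sqrt (A k) + 1 / (2 * \<rho>))\<^sup>2 \<le> A (Suc k)"
    by (simp add: A_Suc)
  then show ?thesis
    by (rule real_le_rsqrt)
qed

lemma sqrt_A_Suc_le: "sqrt (A (Suc k)) \<le> sqrt (A k) + 1 / \<rho>"
proof -
  have "1 + 4 * \<rho>\<^sup>2 * A k \<le> (1 + 2 * \<rho> * sqrt (A k))\<^sup>2"
    using rho_ge_1 A_nonneg[of k] by (simp add: power2_eq_square algebra_simps)
  then have "sqrt (1 + 4 * \<rho>\<^sup>2 * A k) \<le> 1 + 2 * \<rho> * sqrt (A k)"
    by (rule real_le_lsqrt[rotated]) (use rho_ge_1 A_nonneg[of k] in simp)
  then have "\<alpha> (Suc k) \<le> (2 + 2 * \<rho> * sqrt (A k)) / (2 * \<rho>\<^sup>2)"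
    unfolding alpha_Suc largest_root_def using rho_ge_1 by (intro divide_right_mono) auto
  then have "A (Suc k) \<le> A k + (2 + 2 * \<rho> * sqrt (A k)) / (2 * \<rho>\<^sup>2)"
    by (simp add: A_Suc)
  also have "\<dots> \<le> (sqrt (A k) + 1 / \<rho>)\<^sup>2"
    using rho_ge_1 A_nonneg[of k] by (simp add: power2_eq_square field_simps)
  finally show ?thesis
    by (rule real_le_lsqrt[rotated]) (use rho_ge_1 A_nonneg[of k] in simp)
qed

lemma A_lower_bound: "k \<ge> 1 \<Longrightarrow> A k \<ge> (real k - 1 + 2 * \<rho>)\<^sup>2 / (4 * \<rho>\<^sup>2)"
proof (induction k rule: nat_induct_at_least)
  case base
  then show ?case
    using rho_ge_1 A_1 by (simp add: field_simps power2_eq_square)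
next
  case (Suc k)
  have "(real k - 1 + 2 * \<rho>) / (2 * \<rho>) = sqrt ((real k - 1 + 2 * \<rho>)\<^sup>2 / (4 * \<rho>\<^sup>2))"
    using rho_ge_1 Suc.hyps by (simp add: real_sqrt_divide real_sqrt_mult)
  also have "\<dots> \<le> sqrt (A k)"
    using Suc.IH by (rule real_sqrt_le_mono)
  finally have "sqrt (A (Suc k)) \<ge> (real (Suc k) - 1 + 2 * \<rho>) / (2 * \<rho>)"
    using sqrt_A_Suc_ge[of k] rho_ge_1 by (simp add: field_simps)
  then have "(sqrt (A (Suc k)))\<^sup>2 \<ge> ((real (Suc k) - 1 + 2 * \<rho>) / (2 * \<rho>))\<^sup>2"
    using rho_ge_1 by (intro power_mono) auto
  then show ?case
    using A_nonneg by (simp add: power_divide power_mult_distrib)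
qed

lemma A_upper_bound: "k \<ge> 1 \<Longrightarrow> A k \<le> (real k - 1 + \<rho>)\<^sup>2 / \<rho>\<^sup>2"
proof (induction k rule: nat_induct_at_least)
  case base
  then show ?case
    using rho_ge_1 A_1 by simp
next
  case (Suc k)
  have "sqrt (A k) \<le> sqrt ((real k - 1 + \<rho>)\<^sup>2 / \<rho>\<^sup>2)"
    using Suc.IH by (rule real_sqrt_le_mono)
  also have "\<dots> = (real k - 1 + \<rho>) / \<rho>"
    using rho_ge_1 Suc.hyps by (simp add: real_sqrt_divide)
  finally have "sqrt (A (Suc k)) \<le> (real (Suc k) - 1 + \<rho>) / \<rho>"
    using sqrt_A_Suc_le[of k] rho_ge_1 by (simp add: field_simps)
  then have "(sqrt (A (Suc k)))\<^sup>2 \<le> ((real (Suc k) - 1 + \<rho>) / \<rho>)\<^sup>2"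
    by (intro power_mono) (simp_all add: A_nonneg)
  then show ?case
    using A_nonneg[of "Suc k"] by (simp add: power_divide)
qed

end

section \<open>Expectation over uniformly random block choices\<close>

definition block_choices :: "nat \<Rightarrow> (nat \<Rightarrow> 'b::finite) pmf" where
  "block_choices k = Pi_pmf {..<k} undefined (\<lambda>_. pmf_of_set UNIV)"

abbreviation expect :: "nat \<Rightarrow> ((nat \<Rightarrow> 'b::finite) \<Rightarrow> real) \<Rightarrow> real" where
  "expect k F \<equiv> measure_pmf.expectation (block_choices k) F"

lemma finite_set_block_choices: "finite (set_pmf (block_choices k))"
  unfolding block_choices_def by (subst set_Pi_pmf) (auto intro!: finite_PiE_dflt)

lemma integrable_block_choices: "integrable (measure_pmf (block_choices k)) (F :: _ \<Rightarrow> real)"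
  by (rule integrable_measure_pmf_finite[OF finite_set_block_choices])

lemma expect_const: "expect k (\<lambda>_. c) = c"
  by (simp add: measure_pmf.prob_space)

lemma expect_0: "expect 0 F = F (\<lambda>_. undefined)"
  by (simp add: block_choices_def)

lemma expect_add: "expect k (\<lambda>\<omega>. F \<omega> + G \<omega>) = expect k F + expect k G"
  by (rule Bochner_Integration.integral_add) (rule integrable_block_choices)+

lemma expect_mono: "(\<And>\<omega>. F \<omega> \<le> G \<omega>) \<Longrightarrow> expect k F \<le> expect k G"
  by (rule integral_mono) (auto intro: integrable_block_choices)

lemma expect_nonneg: "(\<And>\<omega>. F \<omega> \<ge> 0) \<Longrightarrow> expect k F \<ge> 0"
  using expect_mono[of "\<lambda>_. 0" F k] by (simp add: expect_const)

lemma expect_sum: "expect k (\<lambda>\<omega>. \<Sum>i\<in>I. F i \<omega>) = (\<Sum>i\<in>I. expect k (F i))"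
  by (rule Bochner_Integration.integral_sum) (rule integrable_block_choices)

lemma expect_Suc:
  "expect (Suc k) (F :: (nat \<Rightarrow> 'b::finite) \<Rightarrow> real)
   = (\<Sum>i\<in>UNIV. expect k (\<lambda>\<omega>. F (fun_upd \<omega> k i))) / real CARD('b)"
proof -
  have ins: "{..<Suc k} = insert k {..<k}"
    by auto
  have "(block_choices (Suc k) :: (nat \<Rightarrow> 'b) pmf)
      = do {y \<leftarrow> pmf_of_set (UNIV :: 'b set); f \<leftarrow> block_choices k; return_pmf (f(k := y))}"
    unfolding block_choices_def ins by (rule Pi_pmf_insert') auto
  also have "\<dots> = pmf_of_set UNIV \<bind> (\<lambda>y. map_pmf (\<lambda>f. f(k := y)) (block_choices k))"
    by (simp add: map_pmf_def)
  finally have choices: "(block_choices (Suc k) :: (nat \<Rightarrow> 'b) pmf)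
      = pmf_of_set UNIV \<bind> (\<lambda>y. map_pmf (\<lambda>f. f(k := y)) (block_choices k))" .
  show ?thesis
    unfolding choices by (subst pmf_expectation_bind_pmf_of_set)
      (auto simp: finite_set_block_choices divide_inverse mult.commute sum_distrib_left)
qed

lemma expect_sqrt_le:
  assumes "\<And>\<omega>. X \<omega> \<ge> 0"
  shows "expect k (\<lambda>\<omega>. sqrt (X \<omega>)) \<le> sqrt (expect k X)"
proof -
  have EX: "expect k X \<ge> 0"
    using assms by (rule expect_nonneg)
  have bound: "expect k (\<lambda>\<omega>. sqrt (X \<omega>)) \<le> (expect k X / s + s) / 2" if s: "s > 0" for s
  proof -
    have "sqrt (X \<omega>) \<le> (1 / (2 * s)) * X \<omega> + s / 2" for \<omega>
    proof -
      have "2 * s * sqrt (X \<omega>) \<le> (sqrt (X \<omega>))\<^sup>2 + s\<^sup>2"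
        using sum_squares_bound[of s "sqrt (X \<omega>)"] by (simp add: add.commute)
      then have "2 * s * sqrt (X \<omega>) \<le> X \<omega> + s\<^sup>2"
        using assms[of \<omega>] by simp
      then show ?thesis
        using s by (simp add: field_simps power2_eq_square)
    qed
    then have "expect k (\<lambda>\<omega>. sqrt (X \<omega>)) \<le> expect k (\<lambda>\<omega>. (1 / (2 * s)) * X \<omega> + s / 2)"
      by (rule expect_mono)
    also have "\<dots> = (1 / (2 * s)) * expect k X + s / 2"
      by (simp add: expect_add expect_const)
    finally show ?thesis
      by (simp add: field_simps)
  qed
  show ?thesis
  proof (cases "expect k X > 0")
    case True
    have "expect k (\<lambda>\<omega>. sqrt (X \<omega>)) \<le> (expect k X / sqrt (expect k X) + sqrt (expect k X)) / 2"
      using bound True by simp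
    also have "\<dots> = sqrt (expect k X)"
      using True by (simp add: field_simps)
    finally show ?thesis .
  next
    case False
    then have E0: "expect k X = 0"
      using EX by simp
    show ?thesis
    proof (rule ccontr)
      assume "\<not> ?thesis"
      then have pos: "expect k (\<lambda>\<omega>. sqrt (X \<omega>)) > 0"
        using E0 by simp
      from bound[OF pos] show False
        using pos E0 by simp
    qed
  qed
qed

lemma self_bounding_le:
  fixes M P b :: real
  assumes "M \<ge> 0" "M \<le> P + b * sqrt M"
  shows "M \<le> 2 * P + b\<^sup>2"
proof -
  define t where "t = sqrt M"
  have M: "M = t\<^sup>2"
    using assms(1) by (simp add: t_def)
  have "M \<le> P + b * t"
    using assms(2) by (simp add: t_def)
  moreover have "2 * (b * t) \<le> t\<^sup>2 + b\<^sup>2"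
    using sum_squares_bound[of b t] by (simp add: algebra_simps)
  ultimately show ?thesis
    unfolding M by linarith
qed

lemma self_bounding_le_small:
  fixes M p c :: real
  assumes "M \<ge> 0" "p \<ge> 0" "c \<le> 36 / 100 * p" "M \<le> p\<^sup>2 + c * sqrt M"
  shows "M \<le> 3 / 2 * p\<^sup>2"
proof -
  define t where "t = sqrt M"
  have t: "t \<ge> 0" and M: "M = t\<^sup>2"
    using assms(1) by (auto simp: t_def)
  have "M \<le> p\<^sup>2 + c * t"
    using assms(4) by (simp add: t_def)
  moreover have "c * t \<le> 36 / 100 * p * t"
    using assms(3) t by (intro mult_right_mono) auto
  moreover have "36 / 100 * p * t \<le> 15 / 100 * t\<^sup>2 + 216 / 1000 * p\<^sup>2"
    using zero_le_power2[of "t - 12 / 10 * p"] by (simp add: power2_eq_square algebra_simps)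
  ultimately show ?thesis
    unfolding M using zero_le_power2[of p] by linarith
qed

section \<open>The randomized similar triangles method\<close>

lemma convex_combination_rescale:
  fixes u p :: "'a::real_vector"
  assumes "convex S" "u \<in> S" "p \<in> S" "c1 \<ge> 0" "c2 \<ge> 0"
  obtains q where "q \<in> S" "c1 *\<^sub>R u + c2 *\<^sub>R p = (c1 + c2) *\<^sub>R q"
proof (cases "c1 + c2 = 0")
  case True
  then have "c1 = 0" "c2 = 0"
    using assms(4,5) by linarith+
  then show ?thesis
    using that[of u] assms(2) by simp
next
  case False
  then have "c1 + c2 > 0"
    using assms(4,5) by simp
  let ?q = "(c1 / (c1 + c2)) *\<^sub>R u + (c2 / (c1 + c2)) *\<^sub>R p"
  have "?q \<in> S"
    using assms \<open>c1 + c2 > 0\<close> by (intro convexD) (auto simp: add_divide_distrib[symmetric])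
  moreover have "c1 *\<^sub>R u + c2 *\<^sub>R p = (c1 + c2) *\<^sub>R ?q"
    using \<open>c1 + c2 > 0\<close> by (simp add: scaleR_add_right)
  ultimately show ?thesis
    by (rule that)
qed

text \<open>Outcomes \<open>\<omega>\<close> are sequences of block indices; \<open>\<omega> j\<close> is the block sampled at step \<open>j\<close>.\<close>

locale rstm = block_setup blk eucl QE B L
  for blk :: "'c::finite \<Rightarrow> 'b::finite" and eucl QE B L +
  fixes f :: "real^'c \<Rightarrow> real"
    and grad :: "real^'c \<Rightarrow> real^'c"
    and xstar u0 :: "real^'c"
    and \<xi> :: "nat \<Rightarrow> 'b \<Rightarrow> real^'c \<Rightarrow> real^'c"
    and \<Delta> :: real
    and u x y :: "nat \<Rightarrow> (nat \<Rightarrow> 'b) \<Rightarrow> real^'c"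
  assumes f_convex: "convex_on UNIV f"
    and f_grad: "\<forall>z. (f has_derivative (\<lambda>h. grad z \<bullet> h)) (at z)"
    and lipschitz: "\<forall>i z h. z \<in> Qprod blk eucl QE \<and> h \<in> blkspace blk i \<and> z + h \<in> Qprod blk eucl QE \<longrightarrow>
                      dnorm blk eucl B i (grad (z + h) - grad z) \<le> L i * bnorm blk eucl B i h"
    and xstar_min: "xstar \<in> Qprod blk eucl QE" "\<forall>z\<in>Qprod blk eucl QE. f xstar \<le> f z"
    and u0_Q: "u0 \<in> Qprod blk eucl QE"
    and u0_relint: "\<forall>i. \<not> eucl i \<longrightarrow> blockpart blk i u0 \<in> rel_interior (simplex_blk blk i)"
    and noise: "\<forall>j i z. z \<in> Qprod blk eucl QE \<longrightarrow> dnorm blk eucl B i (\<xi> j i z) \<le> \<Delta>"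
    and init: "\<forall>\<omega>. u 0 \<omega> = u0 \<and> x 0 \<omega> = u0 \<and> y 0 \<omega> = u0"
    and y_step: "\<forall>j \<omega>. y (Suc j) \<omega> = (1 / rstm_A (real CARD('b)) (Suc j)) *\<^sub>R
                   (rstm_alpha (real CARD('b)) (Suc j) *\<^sub>R u j \<omega> + rstm_A (real CARD('b)) j *\<^sub>R x j \<omega>)"
    and u_step: "\<forall>j \<omega>. u (Suc j) \<omega> \<in> Qprod blk eucl QE \<and>
                   (\<forall>z\<in>Qprod blk eucl QE. Vfull blk eucl B L (u j \<omega>) (u (Suc j) \<omega>) + rstm_alpha (real CARD('b)) (Suc j) *
                      ((real CARD('b) *\<^sub>R blockpart blk (\<omega> j) (grad (y (Suc j) \<omega>) + \<xi> j (\<omega> j) (y (Suc j) \<omega>)))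
                         \<bullet> u (Suc j) \<omega>)
                    \<le> Vfull blk eucl B L (u j \<omega>) z + rstm_alpha (real CARD('b)) (Suc j) *
                      ((real CARD('b) *\<^sub>R blockpart blk (\<omega> j) (grad (y (Suc j) \<omega>) + \<xi> j (\<omega> j) (y (Suc j) \<omega>)))
                         \<bullet> z))"
    and x_step: "\<forall>j \<omega>. x (Suc j) \<omega> = y (Suc j) \<omega> + (real CARD('b) * rstm_alpha (real CARD('b)) (Suc j)
                   / rstm_A (real CARD('b)) (Suc j)) *\<^sub>R (u (Suc j) \<omega> - u j \<omega>)"
begin

definition L0 :: real where "L0 = Min (range L)"

lemma n_ge_1: "real CARD('b) \<ge> 1"
proof -
  have "CARD('b) > 0"
    by simp
  then show ?thesis
    by linarith
qed

sublocale rstm_steps "real CARD('b)"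
  by unfold_locales (rule n_ge_1)

definition stoch_grad :: "nat \<Rightarrow> (nat \<Rightarrow> 'b) \<Rightarrow> real^'c" where
  "stoch_grad j \<omega> = real CARD('b) *\<^sub>R blockpart blk (\<omega> j) (grad (y (Suc j) \<omega>) + \<xi> j (\<omega> j) (y (Suc j) \<omega>))"

lemma u_Suc_prox: "prox_point (u j \<omega>) (\<alpha> (Suc j) *\<^sub>R stoch_grad j \<omega>) (u (Suc j) \<omega>)"
  using u_step unfolding prox_point_def stoch_grad_def by (simp add: inner_scaleR_left mult.assoc)

lemma blockpart_stoch_grad_other: "b \<noteq> \<omega> j \<Longrightarrow> blockpart blk b (\<alpha> (Suc j) *\<^sub>R stoch_grad j \<omega>) = 0"
  unfolding stoch_grad_def by (simp add: blockpart_scaleR blockpart_of_blkspace_other[OF blockpart_in_blkspace])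

text \<open>If a coordinate of \<open>u0\<close> in an entropy block vanished, moving from the corresponding vertex
  of the simplex through \<open>u0\<close> would immediately leave the simplex.\<close>

lemma u0_entropy_pos: "entropy_pos u0"
  unfolding entropy_pos_def
proof (intro allI impI)
  fix c assume ent: "\<not> eucl (blk c)"
  define i where "i = blk c"
  define p where "p = blockpart blk i u0"
  define e :: "real^'c" where "e = (\<chi> d. if d = c then 1 else 0)"
  have p: "p \<in> rel_interior (simplex_blk blk i)"
    using u0_relint ent by (simp add: p_def i_def)
  have "(\<Sum>d\<in>{d. blk d = i}. e $ d) = (\<Sum>d\<in>{d. blk d = i}. if d = c then 1 else 0)"
    by (simp add: e_def)
  also have "\<dots> = 1"
    by (simp add: i_def)
  finally have e: "e \<in> simplex_blk blk i"
    by (auto simp: simplex_blk_def blkspace_def e_def i_def)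
  show "u0 $ c > 0"
  proof (rule ccontr)
    assume "\<not> u0 $ c > 0"
    moreover have "u0 $ c \<ge> 0"
      using Q_entropy_block(1)[OF u0_Q ent] by simp
    ultimately have pc: "p $ c = 0"
      by (simp add: p_def i_def)
    have "e \<in> affine hull simplex_blk blk i"
      using e by (rule hull_inc)
    then obtain m where "m > 1" and m: "\<forall>t. t > 1 \<and> t \<le> m \<longrightarrow> (1 - t) *\<^sub>R e + t *\<^sub>R p \<in> simplex_blk blk i"
      using convex_rel_interior_if[OF convex_simplex_blk p] by blast
    then have "((1 - m) *\<^sub>R e + m *\<^sub>R p) $ c \<ge> 0"
      by (auto simp: simplex_blk_def)
    then show False
      using pc \<open>m > 1\<close> by (simp add: e_def)
  qed
qed

lemma y_Suc_eq: "y (Suc j) \<omega> = (\<alpha> (Suc j) / A (Suc j)) *\<^sub>R u j \<omega> + (A j / A (Suc j)) *\<^sub>R x j \<omega>"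
  using y_step by (simp add: scaleR_add_right)

lemma y_Suc_in_Q: "u j \<omega> \<in> Q \<Longrightarrow> x j \<omega> \<in> Q \<Longrightarrow> y (Suc j) \<omega> \<in> Q"
  unfolding y_Suc_eq using A_pos[of j] alpha_pos[of j] A_nonneg[of j]
  by (intro convexD[OF convex_Q]) (auto simp: A_Suc add_divide_distrib[symmetric])

lemma x_Suc_nth:
  "x (Suc j) \<omega> $ c = (\<alpha> (Suc j) * u j \<omega> $ c + A j * x j \<omega> $ c) / A (Suc j)
     + real CARD('b) * \<alpha> (Suc j) / A (Suc j) * (u (Suc j) \<omega> $ c - u j \<omega> $ c)"
  using x_step y_step by simp

text \<open>The extrapolation \<open>x (Suc j)\<close> leaves the segment between \<open>y (Suc j)\<close> and \<open>u (Suc j)\<close>, so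
  its feasibility is not automatic. It follows from the invariant that every block of \<open>x j\<close> is
  a convex combination of \<open>u j\<close> and a feasible point, with weight at least
  \<open>(CARD('b) - 1) \<alpha> (j + 1) / A j\<close> on \<open>u j\<close>.\<close>

definition x_block_decomp :: "nat \<Rightarrow> (nat \<Rightarrow> 'b) \<Rightarrow> 'b \<Rightarrow> bool" where
  "x_block_decomp j \<omega> b \<longleftrightarrow> (\<exists>p \<theta>. p \<in> Q \<and> 0 \<le> \<theta> \<and> \<theta> \<le> 1 \<and> (real CARD('b) - 1) * \<alpha> (Suc j) \<le> A j * \<theta> \<and>
     (\<forall>c. blk c = b \<longrightarrow> x j \<omega> $ c = \<theta> * u j \<omega> $ c + (1 - \<theta>) * p $ c))"

lemma x_block_decomp_0: "x_block_decomp 0 \<omega> b"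
proof -
  have "(real CARD('b) - 1) * \<alpha> (Suc 0) \<le> A 0 * 1"
    by (simp add: alpha_1 field_simps)
  then show ?thesis
    unfolding x_block_decomp_def using init u0_Q by (intro exI[of _ u0] exI[of _ 1]) auto
qed

lemma x_in_Q_if_decomp:
  assumes "u j \<omega> \<in> Q" "\<And>b. x_block_decomp j \<omega> b"
  shows "x j \<omega> \<in> Q"
  unfolding mem_Q_iff
proof
  fix b
  obtain p \<theta> where p: "p \<in> Q" "0 \<le> \<theta>" "\<theta> \<le> 1"
    and x: "\<forall>c. blk c = b \<longrightarrow> x j \<omega> $ c = \<theta> * u j \<omega> $ c + (1 - \<theta>) * p $ c"
    using assms(2) unfolding x_block_decomp_def by blast
  have "blockpart blk b (\<theta> *\<^sub>R u j \<omega> + (1 - \<theta>) *\<^sub>R p) \<in> Qblk blk eucl QE b"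
    using convexD[OF convex_Q assms(1) p(1), of \<theta> "1 - \<theta>"] p mem_Q_iff by auto
  moreover have "blockpart blk b (x j \<omega>) = blockpart blk b (\<theta> *\<^sub>R u j \<omega> + (1 - \<theta>) *\<^sub>R p)"
    using x by (simp add: vec_eq_iff)
  ultimately show "blockpart blk b (x j \<omega>) \<in> Qblk blk eucl QE b"
    by simp
qed

lemma x_Suc_block_weights:
  assumes u: "u j \<omega> \<in> Q" "entropy_pos (u j \<omega>)"
    and x: "\<forall>c. blk c = b \<longrightarrow> x j \<omega> $ c = \<theta> * u j \<omega> $ c + (1 - \<theta>) * p $ c"
    and \<theta>: "0 \<le> \<theta>" "\<theta> \<le> 1" "(real CARD('b) - 1) * \<alpha> (Suc j) \<le> A j * \<theta>"
  obtains \<theta>' c1 c2 where "0 \<le> \<theta>'" "0 \<le> c1" "0 \<le> c2" "\<theta>' + c1 + c2 = 1"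
    "(real CARD('b) - 1) * \<alpha> (Suc (Suc j)) \<le> A (Suc j) * \<theta>'"
    "\<forall>c. blk c = b \<longrightarrow> x (Suc j) \<omega> $ c = \<theta>' * u (Suc j) \<omega> $ c + c1 * u j \<omega> $ c + c2 * p $ c"
proof -
  let ?N = "real CARD('b)"
  define a A0 A1 where "a = \<alpha> (Suc j)" and "A0 = A j" and "A1 = A (Suc j)"
  have A1: "A1 = A0 + a" "A1 > 0" and "a > 0" "A0 \<ge> 0"
    unfolding a_def A0_def A1_def by (rule A_Suc A_pos alpha_pos A_nonneg)+
  have weight: "(?N - 1) * a \<le> A0 * \<theta>"
    using \<theta>(3) by (simp add: a_def A0_def)
  have ratio: "(?N - 1) * \<alpha> (Suc (Suc j)) \<le> ?N * a"
    unfolding a_def by (rule alpha_ratio)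
  have x_Suc: "x (Suc j) \<omega> $ c
      = (a * u j \<omega> $ c + A0 * (\<theta> * u j \<omega> $ c + (1 - \<theta>) * p $ c)) / A1
        + ?N * a / A1 * (u (Suc j) \<omega> $ c - u j \<omega> $ c)" if "blk c = b" for c
    using x that by (simp add: x_Suc_nth a_def A0_def A1_def)
  show ?thesis
  proof (cases "b = \<omega> j")
    case True
    show ?thesis
    proof (rule that[of "?N * a / A1" "(A0 * \<theta> - (?N - 1) * a) / A1" "A0 * (1 - \<theta>) / A1"])
      show "0 \<le> ?N * a / A1" "0 \<le> (A0 * \<theta> - (?N - 1) * a) / A1" "0 \<le> A0 * (1 - \<theta>) / A1"
        using A1(2) \<open>a > 0\<close> \<open>A0 \<ge> 0\<close> \<theta> weight by simp_all
      have "?N * a + (A0 * \<theta> - (?N - 1) * a) + A0 * (1 - \<theta>) = A1"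
        using A1(1) by (simp add: algebra_simps)
      then show "?N * a / A1 + (A0 * \<theta> - (?N - 1) * a) / A1 + A0 * (1 - \<theta>) / A1 = 1"
        using A1(2) by (simp add: add_divide_distrib[symmetric])
      show "(?N - 1) * \<alpha> (Suc (Suc j)) \<le> A (Suc j) * (?N * a / A1)"
        using ratio A1(2) by (simp add: A1_def[symmetric])
      show "\<forall>c. blk c = b \<longrightarrow> x (Suc j) \<omega> $ c = ?N * a / A1 * u (Suc j) \<omega> $ c
              + (A0 * \<theta> - (?N - 1) * a) / A1 * u j \<omega> $ c + A0 * (1 - \<theta>) / A1 * p $ c"
        using A1(2) by (auto simp: x_Suc field_simps)
    qed
  next
    case False
    have same: "u (Suc j) \<omega> $ c = u j \<omega> $ c" if "blk c = b" for c
      using prox_other_blocks[OF u u_Suc_prox blockpart_stoch_grad_other[of b \<omega> j, OF False]] that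
      by (metis blockpart_nth)
    show ?thesis
    proof (rule that[of "(a + A0 * \<theta>) / A1" 0 "A0 * (1 - \<theta>) / A1"])
      show "0 \<le> (a + A0 * \<theta>) / A1" "0 \<le> (0::real)" "0 \<le> A0 * (1 - \<theta>) / A1"
        using A1 \<open>a > 0\<close> \<open>A0 \<ge> 0\<close> \<theta> by simp_all
      have "(a + A0 * \<theta>) + A0 * (1 - \<theta>) = A1"
        using A1(1) by (simp add: algebra_simps)
      then show "(a + A0 * \<theta>) / A1 + 0 + A0 * (1 - \<theta>) / A1 = 1"
        using A1(2) by (simp add: add_divide_distrib[symmetric])
      have "(?N - 1) * \<alpha> (Suc (Suc j)) \<le> a + A0 * \<theta>"
        using ratio weight by (simp add: algebra_simps)
      then show "(?N - 1) * \<alpha> (Suc (Suc j)) \<le> A (Suc j) * ((a + A0 * \<theta>) / A1)"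
        using A1(2) by (simp add: A1_def[symmetric])
      show "\<forall>c. blk c = b \<longrightarrow> x (Suc j) \<omega> $ c = (a + A0 * \<theta>) / A1 * u (Suc j) \<omega> $ c
              + 0 * u j \<omega> $ c + A0 * (1 - \<theta>) / A1 * p $ c"
        using A1(2) by (auto simp: x_Suc same field_simps)
    qed
  qed
qed

lemma x_block_decomp_Suc:
  assumes "u j \<omega> \<in> Q" "entropy_pos (u j \<omega>)" "x_block_decomp j \<omega> b"
  shows "x_block_decomp (Suc j) \<omega> b"
proof -
  obtain p \<theta> where p: "p \<in> Q" and \<theta>: "0 \<le> \<theta>" "\<theta> \<le> 1" "(real CARD('b) - 1) * \<alpha> (Suc j) \<le> A j * \<theta>"
    and x: "\<forall>c. blk c = b \<longrightarrow> x j \<omega> $ c = \<theta> * u j \<omega> $ c + (1 - \<theta>) * p $ c"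
    using assms(3) unfolding x_block_decomp_def by blast
  obtain \<theta>' c1 c2 where w: "0 \<le> \<theta>'" "0 \<le> c1" "0 \<le> c2" "\<theta>' + c1 + c2 = 1"
    "(real CARD('b) - 1) * \<alpha> (Suc (Suc j)) \<le> A (Suc j) * \<theta>'"
    and x': "\<forall>c. blk c = b \<longrightarrow> x (Suc j) \<omega> $ c = \<theta>' * u (Suc j) \<omega> $ c + c1 * u j \<omega> $ c + c2 * p $ c"
    using x_Suc_block_weights[OF assms(1,2) x \<theta>] by blast
  obtain q where q: "q \<in> Q" "c1 *\<^sub>R u j \<omega> + c2 *\<^sub>R p = (c1 + c2) *\<^sub>R q"
    using convex_combination_rescale[OF convex_Q assms(1) p w(2,3)] by blast
  have c1_c2: "c1 + c2 = 1 - \<theta>'"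
    using w(4) by linarith
  have "x (Suc j) \<omega> $ c = \<theta>' * u (Suc j) \<omega> $ c + (1 - \<theta>') * q $ c" if "blk c = b" for c
  proof -
    have "c1 * u j \<omega> $ c + c2 * p $ c = (1 - \<theta>') * q $ c"
      using arg_cong[OF q(2), of "\<lambda>v. v $ c"] unfolding c1_c2 by simp
    then show ?thesis
      using x'[rule_format, OF that] by linarith
  qed
  then show ?thesis
    unfolding x_block_decomp_def using q(1) w by (intro exI[of _ q] exI[of _ \<theta>']) auto
qed

lemma iterates_invariant:
  "u j \<omega> \<in> Q \<and> entropy_pos (u j \<omega>) \<and> (\<forall>b. x_block_decomp j \<omega> b)"
proof (induction j)
  case 0
  then show ?case
    using init u0_Q u0_entropy_pos x_block_decomp_0 by simp
next
  case (Suc j)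
  then have u: "u j \<omega> \<in> Q" "entropy_pos (u j \<omega>)"
    by simp_all
  have "u (Suc j) \<omega> \<in> Q"
    using u_Suc_prox by (rule prox_point_in_Q)
  moreover have "entropy_pos (u (Suc j) \<omega>)"
    using u u_Suc_prox by (rule prox_entropy_pos)
  moreover have "\<forall>b. x_block_decomp (Suc j) \<omega> b"
    using Suc u x_block_decomp_Suc by blast
  ultimately show ?case
    by blast
qed

lemma u_in_Q: "u j \<omega> \<in> Q"
  using iterates_invariant by blast

lemma u_entropy_pos: "entropy_pos (u j \<omega>)"
  using iterates_invariant by blast

lemma x_in_Q: "x j \<omega> \<in> Q"
  using iterates_invariant by (blast intro: x_in_Q_if_decomp)

lemma y_in_Q: "y (Suc j) \<omega> \<in> Q"
  using u_in_Q x_in_Q by (rule y_Suc_in_Q)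

lemma iterates_depend_on_prefix:
  "(\<forall>j<k. \<omega> j = \<omega>' j) \<Longrightarrow> u k \<omega> = u k \<omega>' \<and> x k \<omega> = x k \<omega>'"
proof (induction k)
  case 0
  then show ?case
    using init by simp
next
  case (Suc k)
  then have IH: "u k \<omega> = u k \<omega>'" "x k \<omega> = x k \<omega>'" and "\<omega> k = \<omega>' k"
    by auto
  then have "y (Suc k) \<omega> = y (Suc k) \<omega>'" and "stoch_grad k \<omega> = stoch_grad k \<omega>'"
    using y_step by (simp_all add: stoch_grad_def)
  then have "prox_point (u k \<omega>) (\<alpha> (Suc k) *\<^sub>R stoch_grad k \<omega>) (u (Suc k) \<omega>')"
    using u_Suc_prox[of k \<omega>'] IH by simp
  then have "u (Suc k) \<omega>' = u (Suc k) \<omega>"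
    using u_in_Q u_entropy_pos u_Suc_prox by (blast intro: prox_unique)
  then show ?case
    using x_step \<open>y (Suc k) \<omega> = y (Suc k) \<omega>'\<close> IH by simp
qed

lemma L0_pos: "L0 > 0"
  unfolding L0_def using L_pos by (subst Min_gr_iff) auto

lemma L0_le: "L0 \<le> L i"
  unfolding L0_def by (rule Min_le) auto

lemma Delta_nonneg: "\<Delta> \<ge> 0"
  using noise xstar_min(1) dnorm_nonneg by (meson order_trans)

lemma u_Suc_diff_in_block: "blockpart blk (\<omega> j) (u (Suc j) \<omega> - u j \<omega>) = u (Suc j) \<omega> - u j \<omega>"
proof -
  have "(u (Suc j) \<omega> - u j \<omega>) $ c = 0" if "blk c \<noteq> \<omega> j" for c
    using prox_other_blocks[OF u_in_Q u_entropy_pos u_Suc_prox blockpart_stoch_grad_other[of "blk c" \<omega> j, OF that]]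
    by (metis blockpart_nth vector_minus_component right_minus_eq)
  then show ?thesis
    by (auto simp: vec_eq_iff)
qed

section \<open>Convergence analysis\<close>

text \<open>By the step-size equation \<open>A\<^sub>j\<^sub>+\<^sub>1 = n\<^sup>2 \<alpha>\<^sub>j\<^sub>+\<^sub>1\<^sup>2\<close>, the quadratic term of the descent lemma
  is exactly \<open>L\<^sub>i/2 \<parallel>u\<^sub>j\<^sub>+\<^sub>1 - u\<^sub>j\<parallel>\<^sub>i\<^sup>2\<close>, which the strong convexity of \<open>V\<close> absorbs.\<close>

lemma descent_step:
  fixes j :: nat and \<omega> :: "nat \<Rightarrow> 'b"
  defines "i \<equiv> \<omega> j" and "d \<equiv> u (Suc j) \<omega> - u j \<omega>"
  shows "A (Suc j) * f (x (Suc j) \<omega>)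
         \<le> A (Suc j) * f (y (Suc j) \<omega>) + real CARD('b) * \<alpha> (Suc j) * (blockpart blk i (grad (y (Suc j) \<omega>)) \<bullet> d)
           + L i / 2 * (bnorm blk eucl B i d)\<^sup>2"
proof -
  define c where "c = real CARD('b) * \<alpha> (Suc j) / A (Suc j)"
  have d: "d \<in> blkspace blk i"
    using u_Suc_diff_in_block[of \<omega> j] blockpart_in_blkspace[of blk i d] by (simp add: d_def i_def)
  have x: "x (Suc j) \<omega> = y (Suc j) \<omega> + c *\<^sub>R d"
    using x_step by (simp add: c_def d_def)
  have "f (y (Suc j) \<omega> + c *\<^sub>R d)
        \<le> f (y (Suc j) \<omega>) + grad (y (Suc j) \<omega>) \<bullet> (c *\<^sub>R d) + L i / 2 * (bnorm blk eucl B i (c *\<^sub>R d))\<^sup>2"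
    using x_in_Q[of "Suc j" \<omega>] x
    by (intro block_descent[OF f_grad lipschitz y_in_Q _ blkspace_scaleR[OF d]]) simp
  moreover have "grad (y (Suc j) \<omega>) \<bullet> d = blockpart blk i (grad (y (Suc j) \<omega>)) \<bullet> d"
    using u_Suc_diff_in_block[of \<omega> j] by (simp add: inner_blockpart_swap d_def i_def)
  moreover have "c \<ge> 0" "A (Suc j) * c = real CARD('b) * \<alpha> (Suc j)" "c\<^sup>2 * A (Suc j) = 1"
    using A_pos[of j] alpha_pos[of j] A_Suc_eq[of j] by (simp_all add: c_def power2_eq_square field_simps)
  ultimately have "A (Suc j) * f (x (Suc j) \<omega>) \<le> A (Suc j) * (f (y (Suc j) \<omega>)
      + c * (blockpart blk i (grad (y (Suc j) \<omega>)) \<bullet> d) + L i / 2 * (c\<^sup>2 * (bnorm blk eucl B i d)\<^sup>2))"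
    using A_pos[of j] x by (simp add: bnorm_scaleR power_mult_distrib)
  also have "\<dots> = A (Suc j) * f (y (Suc j) \<omega>) + (A (Suc j) * c) * (blockpart blk i (grad (y (Suc j) \<omega>)) \<bullet> d)
      + L i / 2 * (c\<^sup>2 * A (Suc j)) * (bnorm blk eucl B i d)\<^sup>2"
    by (simp add: algebra_simps)
  finally show ?thesis
    using \<open>A (Suc j) * c = _\<close> \<open>c\<^sup>2 * A (Suc j) = 1\<close> by simp
qed

definition dist_bound :: "nat \<Rightarrow> (nat \<Rightarrow> 'b) \<Rightarrow> real" where
  "dist_bound k \<omega> = sqrt (2 * V (u k \<omega>) xstar / L0)"

lemma V_iterate_nonneg: "V (u k \<omega>) xstar \<ge> 0"
  using xstar_min(1) u_in_Q u_entropy_pos by (rule Vfull_nonneg)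

lemma bnorm_le_dist_bound: "bnorm blk eucl B i (xstar - u k \<omega>) \<le> dist_bound k \<omega>"
proof -
  have "L i * (bnorm blk eucl B i (xstar - u k \<omega>))\<^sup>2 / 2 \<le> V (u k \<omega>) xstar"
    using xstar_min(1) u_in_Q u_entropy_pos by (rule Vfull_ge_sq_bnorm)
  then have "(bnorm blk eucl B i (xstar - u k \<omega>))\<^sup>2 \<le> 2 * V (u k \<omega>) xstar / L i"
    using L_pos by (simp add: field_simps)
  also have "\<dots> \<le> 2 * V (u k \<omega>) xstar / L0"
    using V_iterate_nonneg L0_pos L0_le[of i] by (intro divide_left_mono) auto
  finally show ?thesis
    unfolding dist_bound_def using bnorm_nonneg by (intro real_le_rsqrt) simp
qed

lemma noise_term_le:
  "blockpart blk i (\<xi> j i (y (Suc j) \<omega>)) \<bullet> (xstar - u (Suc j) \<omega>) \<le> \<Delta> * dist_bound (Suc j) \<omega>"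
proof -
  have "blockpart blk i (\<xi> j i (y (Suc j) \<omega>)) \<bullet> (xstar - u (Suc j) \<omega>)
        \<le> dnorm blk eucl B i (\<xi> j i (y (Suc j) \<omega>)) * bnorm blk eucl B i (xstar - u (Suc j) \<omega>)"
    by (rule inner_le_dnorm_bnorm)
  also have "\<dots> \<le> \<Delta> * dist_bound (Suc j) \<omega>"
    using noise y_in_Q bnorm_nonneg Delta_nonneg bnorm_le_dist_bound
    by (intro mult_mono) auto
  finally show ?thesis .
qed

lemma step_inequality:
  fixes j :: nat and \<omega> :: "nat \<Rightarrow> 'b"
  defines "i \<equiv> \<omega> j"
  shows "A (Suc j) * f (x (Suc j) \<omega>) + V (u (Suc j) \<omega>) xstar
         \<le> A (Suc j) * f (y (Suc j) \<omega>)
           + real CARD('b) * \<alpha> (Suc j) * (blockpart blk i (grad (y (Suc j) \<omega>)) \<bullet> (xstar - u j \<omega>))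
           + V (u j \<omega>) xstar + real CARD('b) * \<alpha> (Suc j) * \<Delta> * dist_bound (Suc j) \<omega>"
proof -
  define N a where "N = real CARD('b)" and "a = \<alpha> (Suc j)"
  define g where "g = blockpart blk i (grad (y (Suc j) \<omega>))"
  define e where "e = blockpart blk i (\<xi> j i (y (Suc j) \<omega>))"
  define d where "d = u (Suc j) \<omega> - u j \<omega>"
  have "a \<ge> 0" "N \<ge> 0"
    using alpha_pos[of j] by (simp_all add: a_def N_def)
  have "V (u (Suc j) \<omega>) xstar
        \<le> V (u j \<omega>) xstar - V (u j \<omega>) (u (Suc j) \<omega>) + (a *\<^sub>R stoch_grad j \<omega>) \<bullet> (xstar - u (Suc j) \<omega>)"
    unfolding a_def
    using u_in_Q u_entropy_pos u_entropy_pos u_Suc_prox xstar_min(1) by (rule prox_three_point)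
  moreover have "(a *\<^sub>R stoch_grad j \<omega>) \<bullet> (xstar - u (Suc j) \<omega>)
                 = N * a * (g \<bullet> (xstar - u (Suc j) \<omega>)) + N * a * (e \<bullet> (xstar - u (Suc j) \<omega>))"
    by (simp add: stoch_grad_def g_def e_def N_def i_def blockpart_add inner_add_left algebra_simps)
  moreover have "N * a * (e \<bullet> (xstar - u (Suc j) \<omega>)) \<le> N * a * (\<Delta> * dist_bound (Suc j) \<omega>)"
    unfolding e_def using noise_term_le \<open>a \<ge> 0\<close> \<open>N \<ge> 0\<close> by (intro mult_left_mono) auto
  moreover have "V (u j \<omega>) (u (Suc j) \<omega>) \<ge> L i * (bnorm blk eucl B i d)\<^sup>2 / 2"
    unfolding d_def using u_in_Q u_in_Q u_entropy_pos by (rule Vfull_ge_sq_bnorm)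
  moreover have "A (Suc j) * f (x (Suc j) \<omega>)
        \<le> A (Suc j) * f (y (Suc j) \<omega>) + N * a * (g \<bullet> d) + L i / 2 * (bnorm blk eucl B i d)\<^sup>2"
    unfolding N_def a_def g_def d_def i_def by (rule descent_step)
  moreover have "N * a * (g \<bullet> d) + N * a * (g \<bullet> (xstar - u (Suc j) \<omega>)) = N * a * (g \<bullet> (xstar - u j \<omega>))"
  proof -
    have "g \<bullet> d + g \<bullet> (xstar - u (Suc j) \<omega>) = g \<bullet> (xstar - u j \<omega>)"
      by (simp add: d_def inner_diff_right)
    then show ?thesis
      by (metis distrib_left)
  qed
  moreover have "L i / 2 * (bnorm blk eucl B i d)\<^sup>2 = L i * (bnorm blk eucl B i d)\<^sup>2 / 2"
    by simp
  ultimately have "A (Suc j) * f (x (Suc j) \<omega>) + V (u (Suc j) \<omega>) xstar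
      \<le> A (Suc j) * f (y (Suc j) \<omega>) + N * a * (g \<bullet> (xstar - u j \<omega>))
        + V (u j \<omega>) xstar + N * a * (\<Delta> * dist_bound (Suc j) \<omega>)"
    by linarith
  then show ?thesis
    by (simp add: N_def a_def g_def mult.assoc)
qed

definition lyapunov :: "nat \<Rightarrow> (nat \<Rightarrow> 'b) \<Rightarrow> real" where
  "lyapunov k \<omega> = A k * (f (x k \<omega>) - f xstar) + V (u k \<omega>) xstar"

lemma V_le_lyapunov: "V (u k \<omega>) xstar \<le> lyapunov k \<omega>"
  using xstar_min(2) x_in_Q A_nonneg by (simp add: lyapunov_def)

lemma lyapunov_nonneg: "lyapunov k \<omega> \<ge> 0"
  by (rule order_trans[OF V_iterate_nonneg V_le_lyapunov])

lemma coupling_convexity: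
  "A (Suc j) * f (y (Suc j) \<omega>) + \<alpha> (Suc j) * (grad (y (Suc j) \<omega>) \<bullet> (xstar - u j \<omega>))
   \<le> \<alpha> (Suc j) * f xstar + A j * f (x j \<omega>)"
proof -
  define a A0 A1 g where "a = \<alpha> (Suc j)" and "A0 = A j" and "A1 = A (Suc j)"
    and "g = grad (y (Suc j) \<omega>)"
  have "a \<ge> 0" "A0 \<ge> 0" "A1 = A0 + a"
    using alpha_pos[of j] A_nonneg[of j] by (simp_all add: a_def A0_def A1_def A_Suc)
  have y: "A1 *\<^sub>R y (Suc j) \<omega> = a *\<^sub>R u j \<omega> + A0 *\<^sub>R x j \<omega>"
    using y_step A_pos[of j] by (simp add: a_def A0_def A1_def)
  have "a * (f (y (Suc j) \<omega>) + g \<bullet> (xstar - y (Suc j) \<omega>)) + A0 * (f (y (Suc j) \<omega>) + g \<bullet> (x j \<omega> - y (Suc j) \<omega>))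
        \<le> a * f xstar + A0 * f (x j \<omega>)"
    unfolding g_def using \<open>a \<ge> 0\<close> \<open>A0 \<ge> 0\<close>
    by (intro add_mono mult_left_mono convex_gradient_inequality[OF f_convex f_grad])
  moreover have "a * (f (y (Suc j) \<omega>) + g \<bullet> (xstar - y (Suc j) \<omega>)) + A0 * (f (y (Suc j) \<omega>) + g \<bullet> (x j \<omega> - y (Suc j) \<omega>))
        = A1 * f (y (Suc j) \<omega>) + g \<bullet> (a *\<^sub>R xstar + A0 *\<^sub>R x j \<omega> - A1 *\<^sub>R y (Suc j) \<omega>)"
    using \<open>A1 = A0 + a\<close> by (simp add: inner_diff_right algebra_simps)
  moreover have "a *\<^sub>R xstar + A0 *\<^sub>R x j \<omega> - A1 *\<^sub>R y (Suc j) \<omega> = a *\<^sub>R (xstar - u j \<omega>)"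
    unfolding y by (simp add: algebra_simps)
  ultimately show ?thesis
    by (simp add: a_def A0_def A1_def g_def)
qed

text \<open>Averaging the step inequality over the block chosen at step \<open>j\<close> turns the partial gradient
  \<open>n U_i^T \<nabla>f\<close> into the full gradient, and convexity of \<open>f\<close> then closes the recursion.\<close>

lemma lyapunov_average_step:
  "(\<Sum>i\<in>UNIV. lyapunov (Suc j) (fun_upd \<omega> j i)) / real CARD('b)
   \<le> lyapunov j \<omega> + \<alpha> (Suc j) * \<Delta> * (\<Sum>i\<in>UNIV. dist_bound (Suc j) (fun_upd \<omega> j i))"
proof -
  define N a where "N = real CARD('b)" and "a = \<alpha> (Suc j)"
  define g w where "g = grad (y (Suc j) \<omega>)" and "w = xstar - u j \<omega>"
  define K where "K = A (Suc j) * f (y (Suc j) \<omega>) + V (u j \<omega>) xstar - A (Suc j) * f xstar"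
  have prefix: "u j (fun_upd \<omega> j i) = u j \<omega>" "x j (fun_upd \<omega> j i) = x j \<omega>" for i
    using iterates_depend_on_prefix[of j "fun_upd \<omega> j i" \<omega>] by simp_all
  then have "y (Suc j) (fun_upd \<omega> j i) = y (Suc j) \<omega>" for i
    using y_step by simp
  then have "lyapunov (Suc j) (fun_upd \<omega> j i)
             \<le> K + N * a * (blockpart blk i g \<bullet> w) + N * a * \<Delta> * dist_bound (Suc j) (fun_upd \<omega> j i)" for i
    using step_inequality[of j "fun_upd \<omega> j i"] prefix[of i]
    by (simp add: lyapunov_def K_def N_def a_def g_def w_def algebra_simps)
  then have "(\<Sum>i\<in>UNIV. lyapunov (Suc j) (fun_upd \<omega> j i))
      \<le> (\<Sum>i\<in>UNIV. K + N * a * (blockpart blk i g \<bullet> w) + N * a * \<Delta> * dist_bound (Suc j) (fun_upd \<omega> j i))"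
    by (rule sum_mono)
  also have "\<dots> = N * K + N * a * (g \<bullet> w) + N * a * \<Delta> * (\<Sum>i\<in>UNIV. dist_bound (Suc j) (fun_upd \<omega> j i))"
    by (simp add: sum.distrib sum_distrib_left[symmetric] inner_sum_left[symmetric] sum_blockpart N_def)
  finally have "(\<Sum>i\<in>UNIV. lyapunov (Suc j) (fun_upd \<omega> j i)) / N
      \<le> K + a * (g \<bullet> w) + a * \<Delta> * (\<Sum>i\<in>UNIV. dist_bound (Suc j) (fun_upd \<omega> j i))"
    using n_ge_1 by (simp add: N_def divide_le_eq algebra_simps)
  moreover have "K + a * (g \<bullet> w) \<le> lyapunov j \<omega>"
    using coupling_convexity[of j \<omega>] A_Suc[of j]
    by (simp add: K_def a_def g_def w_def lyapunov_def algebra_simps)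
  ultimately show ?thesis
    by (simp add: N_def a_def)
qed

definition expected_lyapunov :: "nat \<Rightarrow> real" where
  "expected_lyapunov k = expect k (lyapunov k)"

lemma expected_lyapunov_nonneg: "expected_lyapunov k \<ge> 0"
  unfolding expected_lyapunov_def using lyapunov_nonneg by (rule expect_nonneg)

definition P0 :: real where
  "P0 = (1 - 1 / real CARD('b)) * (f u0 - f xstar) + V u0 xstar"

lemma expected_lyapunov_0: "expected_lyapunov 0 = P0"
  using init by (simp add: expected_lyapunov_def expect_0 lyapunov_def P0_def)

text \<open>By Jensen's inequality the expected distance bound is controlled by the expected
  Lyapunov function itself, which gives a recursion of the form \<open>a_{j+1} \<le> a_j + c \<surd>a_{j+1}\<close>.\<close>

lemma expected_lyapunov_Suc:
  "expected_lyapunov (Suc j)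
   \<le> expected_lyapunov j + real CARD('b) * \<alpha> (Suc j) * \<Delta> * sqrt (2 / L0) * sqrt (expected_lyapunov (Suc j))"
proof -
  define N where "N = real CARD('b)"
  have "expected_lyapunov (Suc j) = expect j (\<lambda>\<omega>. (\<Sum>i\<in>UNIV. lyapunov (Suc j) (fun_upd \<omega> j i)) / N)"
    unfolding expected_lyapunov_def N_def by (simp add: expect_Suc expect_sum sum_divide_distrib)
  also have "\<dots> \<le> expect j (\<lambda>\<omega>. lyapunov j \<omega> + \<alpha> (Suc j) * \<Delta> * (\<Sum>i\<in>UNIV. dist_bound (Suc j) (fun_upd \<omega> j i)))"
    unfolding N_def by (intro expect_mono lyapunov_average_step)
  also have "\<dots> = expected_lyapunov j + \<alpha> (Suc j) * \<Delta> * (N * expect (Suc j) (dist_bound (Suc j)))"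
    using expect_Suc[of j "dist_bound (Suc j)"] n_ge_1
    by (simp add: expect_add expect_sum expected_lyapunov_def N_def)
  also have "expect (Suc j) (dist_bound (Suc j)) \<le> sqrt (2 / L0) * sqrt (expected_lyapunov (Suc j))"
  proof -
    have "expect (Suc j) (dist_bound (Suc j)) \<le> sqrt (expect (Suc j) (\<lambda>\<omega>. 2 * V (u (Suc j) \<omega>) xstar / L0))"
      unfolding dist_bound_def using V_iterate_nonneg L0_pos
      by (intro expect_sqrt_le divide_nonneg_pos mult_nonneg_nonneg) auto
    also have "\<dots> \<le> sqrt ((2 / L0) * expected_lyapunov (Suc j))"
    proof (rule real_sqrt_le_mono)
      have "expect (Suc j) (\<lambda>\<omega>. 2 * V (u (Suc j) \<omega>) xstar / L0)
            \<le> expect (Suc j) (\<lambda>\<omega>. (2 / L0) * lyapunov (Suc j) \<omega>)"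
        using V_le_lyapunov L0_pos by (intro expect_mono) (simp add: field_simps)
      then show "expect (Suc j) (\<lambda>\<omega>. 2 * V (u (Suc j) \<omega>) xstar / L0) \<le> (2 / L0) * expected_lyapunov (Suc j)"
        by (simp add: expected_lyapunov_def)
    qed
    finally show ?thesis
      by (simp only: real_sqrt_mult)
  qed
  then have "\<alpha> (Suc j) * \<Delta> * (N * expect (Suc j) (dist_bound (Suc j)))
             \<le> \<alpha> (Suc j) * \<Delta> * (N * (sqrt (2 / L0) * sqrt (expected_lyapunov (Suc j))))"
    using alpha_pos[of j] Delta_nonneg n_ge_1 by (intro mult_left_mono) (auto simp: N_def)
  finally show ?thesis
    by (simp add: N_def algebra_simps)
qed

lemma expected_lyapunov_le:
  "expected_lyapunov m
   \<le> expected_lyapunov 0 + real CARD('b) * \<Delta> * sqrt (2 / L0) * (\<Sum>j\<in>{1..m}. \<alpha> j * sqrt (expected_lyapunov j))"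
proof (induction m)
  case (Suc m)
  then show ?case
    using expected_lyapunov_Suc[of m] by (simp add: algebra_simps)
qed simp

lemma expected_gap_le_lyapunov: "A k * (expect k (\<lambda>\<omega>. f (x k \<omega>)) - f xstar) \<le> expected_lyapunov k"
proof -
  have "expected_lyapunov k = expect k (\<lambda>\<omega>. A k * f (x k \<omega>) + (V (u k \<omega>) xstar - A k * f xstar))"
    unfolding expected_lyapunov_def lyapunov_def by (simp add: algebra_simps)
  also have "\<dots> = A k * expect k (\<lambda>\<omega>. f (x k \<omega>)) + (expect k (\<lambda>\<omega>. V (u k \<omega>) xstar) - A k * f xstar)"
    by (simp add: expect_add expect_const integrable_block_choices)
  finally have "expected_lyapunov k
      = A k * expect k (\<lambda>\<omega>. f (x k \<omega>)) + (expect k (\<lambda>\<omega>. V (u k \<omega>) xstar) - A k * f xstar)" .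
  moreover have "expect k (\<lambda>\<omega>. V (u k \<omega>) xstar) \<ge> 0"
    using V_iterate_nonneg by (rule expect_nonneg)
  ultimately show ?thesis
    by (simp add: algebra_simps)
qed

text \<open>Bounding every term of the recursion by the running maximum \<open>M\<close> costs only a factor
  \<open>\<Sum>j\<in>{1..m}. \<alpha> j = A m - A 0 \<le> A k\<close>.\<close>

lemma expected_lyapunov_self_bound:
  obtains M where "expected_lyapunov k \<le> M" "M \<ge> 0"
    "M \<le> expected_lyapunov 0 + real CARD('b) * \<Delta> * sqrt (2 / L0) * A k * sqrt M"
proof -
  define M where "M = Max (expected_lyapunov ` {..k})"
  have le_M: "expected_lyapunov j \<le> M" if "j \<le> k" for j
    unfolding M_def using that by (intro Max_ge) auto
  have "M \<in> expected_lyapunov ` {..k}"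
    unfolding M_def by (rule Max_in) auto
  then obtain m where m: "m \<le> k" "M = expected_lyapunov m"
    by auto
  have "M \<ge> 0"
    using m expected_lyapunov_nonneg by simp
  define c where "c = real CARD('b) * \<Delta> * sqrt (2 / L0)"
  have "c \<ge> 0"
    using Delta_nonneg L0_pos by (simp add: c_def)
  have "(\<Sum>j\<in>{1..m}. \<alpha> j * sqrt (expected_lyapunov j)) \<le> (\<Sum>j\<in>{1..m}. \<alpha> j * sqrt M)"
  proof (rule sum_mono)
    fix j assume j: "j \<in> {1..m}"
    then have "\<alpha> j \<ge> 0"
      using alpha_pos[of "j - 1"] by simp
    moreover have "sqrt (expected_lyapunov j) \<le> sqrt M"
      using le_M[of j] j m by simp
    ultimately show "\<alpha> j * sqrt (expected_lyapunov j) \<le> \<alpha> j * sqrt M"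
      by (simp add: mult_left_mono)
  qed
  also have "\<dots> = (A m - A 0) * sqrt M"
    by (simp only: sum_distrib_right[symmetric] sum_alpha)
  also have "\<dots> \<le> A k * sqrt M"
  proof (rule mult_right_mono)
    show "A m - A 0 \<le> A k"
      using A_mono[OF m(1)] A_nonneg[of 0] by linarith
  qed (use \<open>M \<ge> 0\<close> in simp)
  finally have "c * (\<Sum>j\<in>{1..m}. \<alpha> j * sqrt (expected_lyapunov j)) \<le> c * (A k * sqrt M)"
    using \<open>c \<ge> 0\<close> by (rule mult_left_mono)
  then have "M \<le> expected_lyapunov 0 + c * A k * sqrt M"
    using expected_lyapunov_le[of m] m(2) by (simp add: c_def algebra_simps)
  then show ?thesis
    using that le_M[of k] \<open>M \<ge> 0\<close> by (simp add: c_def)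
qed

lemma gap_le_if_A_gap_le:
  assumes "k \<ge> 1" "A k * G \<le> R" "R \<ge> 0"
  shows "G \<le> 4 * (real CARD('b))\<^sup>2 * R / (real k - 1 + 2 * real CARD('b))\<^sup>2"
proof -
  define D where "D = (real k - 1 + 2 * real CARD('b))\<^sup>2 / (4 * (real CARD('b))\<^sup>2)"
  have "real k \<ge> 1"
    using assms(1) by simp
  then have "real k - 1 + 2 * real CARD('b) > 0"
    using n_ge_1 by linarith
  then have "D > 0"
    by (simp add: D_def)
  have "D \<le> A k"
    unfolding D_def by (rule A_lower_bound[OF assms(1)])
  have "G \<le> R / D"
  proof (cases "G \<le> 0")
    case True
    then show ?thesis
      using assms(3) \<open>D > 0\<close> by (smt (verit) divide_nonneg_pos)
  next
    case False
    then have "D * G \<le> R"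
      using \<open>D \<le> A k\<close> assms(2) by (smt (verit) mult_right_mono)
    then show ?thesis
      using \<open>D > 0\<close> by (simp add: pos_le_divide_eq mult.commute)
  qed
  then show ?thesis
    by (simp add: D_def algebra_simps)
qed

lemma expected_gap_bound:
  assumes "k \<ge> 1"
  shows "expect k (\<lambda>\<omega>. f (x k \<omega>)) - f xstar
         \<le> 8 * (real CARD('b))\<^sup>2 * P0 / (real k - 1 + 2 * real CARD('b))\<^sup>2
           + 4 / L0 * (real k - 1 + 2 * real CARD('b))\<^sup>2 * \<Delta>\<^sup>2"
proof -
  define N K b where "N = real CARD('b)" and "K = real k - 1 + 2 * N"
    and "b = N * \<Delta> * sqrt (2 / L0) * A k"
  obtain M where M: "expected_lyapunov k \<le> M" "M \<ge> 0" "M \<le> P0 + b * sqrt M"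
    using expected_lyapunov_self_bound[of k] by (auto simp: expected_lyapunov_0 b_def N_def)
  have "A k * (expect k (\<lambda>\<omega>. f (x k \<omega>)) - f xstar) \<le> 2 * P0 + b\<^sup>2"
    using expected_gap_le_lyapunov[of k] M self_bounding_le[OF M(2,3)] by linarith
  moreover have "A k > 0"
    using A_pos[of "k - 1"] assms by simp
  ultimately have "expect k (\<lambda>\<omega>. f (x k \<omega>)) - f xstar \<le> (2 * P0 + b\<^sup>2) / A k"
    by (simp add: field_simps)
  also have "\<dots> = 2 * P0 / A k + N\<^sup>2 * \<Delta>\<^sup>2 * (2 / L0) * A k"
  proof -
    have "b\<^sup>2 = N\<^sup>2 * \<Delta>\<^sup>2 * (2 / L0) * (A k)\<^sup>2"
      using L0_pos by (simp add: b_def power_mult_distrib)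
    then show ?thesis
      using \<open>A k > 0\<close> by (simp add: add_divide_distrib power2_eq_square)
  qed
  also have "2 * P0 / A k \<le> 8 * N\<^sup>2 * P0 / K\<^sup>2"
    using gap_le_if_A_gap_le[OF assms, of "2 * P0 / A k" "2 * P0"] \<open>A k > 0\<close>
      expected_lyapunov_nonneg[of 0]
    by (simp add: expected_lyapunov_0 N_def K_def algebra_simps)
  also have "N\<^sup>2 * \<Delta>\<^sup>2 * (2 / L0) * A k \<le> N\<^sup>2 * \<Delta>\<^sup>2 * (2 / L0) * ((real k - 1 + N)\<^sup>2 / N\<^sup>2)"
    using A_upper_bound[OF assms] L0_pos by (intro mult_left_mono) (auto simp: N_def)
  also have "\<dots> = 2 / L0 * (real k - 1 + N)\<^sup>2 * \<Delta>\<^sup>2"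
    using n_ge_1 by (simp add: N_def field_simps)
  also have "\<dots> \<le> 4 / L0 * K\<^sup>2 * \<Delta>\<^sup>2"
  proof -
    have "(real k - 1 + N)\<^sup>2 \<le> K\<^sup>2"
      using assms n_ge_1 by (intro power_mono) (auto simp: K_def N_def)
    then have "2 * (real k - 1 + N)\<^sup>2 \<le> 4 * K\<^sup>2"
      using zero_le_power2[of K] by linarith
    then have "2 * (real k - 1 + N)\<^sup>2 * \<Delta>\<^sup>2 / L0 \<le> 4 * K\<^sup>2 * \<Delta>\<^sup>2 / L0"
      using L0_pos by (intro divide_right_mono mult_right_mono) auto
    then show ?thesis
      by (simp add: algebra_simps)
  qed
  finally show ?thesis
    by (simp add: N_def K_def)
qed

lemma expected_gap_bound_small_noise:
  assumes "k \<ge> 1" "\<Delta> \<le> sqrt P0 * sqrt L0 / (4 * real CARD('b) * A k)"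
  shows "expect k (\<lambda>\<omega>. f (x k \<omega>)) - f xstar
         \<le> 6 * (real CARD('b))\<^sup>2 * P0 / (real k - 1 + 2 * real CARD('b))\<^sup>2"
proof -
  define N b where "N = real CARD('b)" and "b = N * \<Delta> * sqrt (2 / L0) * A k"
  have P0_nonneg: "P0 \<ge> 0"
    using expected_lyapunov_nonneg[of 0] by (simp add: expected_lyapunov_0)
  obtain M where M: "expected_lyapunov k \<le> M" "M \<ge> 0" "M \<le> (sqrt P0)\<^sup>2 + b * sqrt M"
    using expected_lyapunov_self_bound[of k] P0_nonneg by (auto simp: expected_lyapunov_0 b_def N_def)
  have "A k > 0"
    using A_pos[of "k - 1"] assms(1) by simp
  then have "N * \<Delta> * A k \<le> sqrt P0 * sqrt L0 / 4"
    using assms(2) n_ge_1 by (simp add: N_def pos_le_divide_eq field_simps)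
  then have "b \<le> sqrt P0 * sqrt L0 / 4 * sqrt (2 / L0)"
    unfolding b_def using L0_pos by (simp add: mult_right_mono algebra_simps)
  also have "\<dots> = sqrt P0 * sqrt 2 / 4"
  proof -
    have "sqrt L0 * sqrt (2 / L0) = sqrt 2"
      using L0_pos by (simp add: real_sqrt_mult[symmetric])
    then show ?thesis
      by (simp add: algebra_simps)
  qed
  also have "\<dots> \<le> 36 / 100 * sqrt P0"
  proof -
    have "sqrt 2 \<le> sqrt ((144 / 100)\<^sup>2)"
      by (intro real_sqrt_le_mono) (simp add: power2_eq_square)
    then have "sqrt P0 * sqrt 2 \<le> sqrt P0 * (144 / 100)"
      using P0_nonneg by (intro mult_left_mono) auto
    then show ?thesis
      by simp
  qed
  finally have "M \<le> 3 / 2 * P0"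
    using self_bounding_le_small[OF M(2) _ _ M(3)] P0_nonneg by simp
  then have "A k * (expect k (\<lambda>\<omega>. f (x k \<omega>)) - f xstar) \<le> 3 / 2 * P0"
    using expected_gap_le_lyapunov[of k] M(1) by linarith
  from gap_le_if_A_gap_le[OF assms(1) this] P0_nonneg
  show ?thesis
    by (simp add: algebra_simps)
qed

end

theorem corollary3:
  fixes blk :: "'c::finite \<Rightarrow> 'b::finite"
    and eucl :: "'b \<Rightarrow> bool"
    and QE :: "'b \<Rightarrow> (real^'c) set"
    and B :: "'b \<Rightarrow> 'c \<Rightarrow> 'c \<Rightarrow> real"
    and f :: "real^'c \<Rightarrow> real"
    and grad :: "real^'c \<Rightarrow> real^'c"
    and L :: "'b \<Rightarrow> real"
    and xstar u0 :: "real^'c"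
    and \<xi> :: "nat \<Rightarrow> 'b \<Rightarrow> real^'c \<Rightarrow> real^'c"
    and \<Delta> :: real
    and u x y :: "nat \<Rightarrow> (nat \<Rightarrow> 'b) \<Rightarrow> real^'c"
    and k :: nat
  defines "n \<equiv> real CARD('b)"
    and "Q \<equiv> Qprod blk eucl QE"
    and "V \<equiv> Vfull blk eucl B L"
    and "A \<equiv> rstm_A (real CARD('b))"
    and "\<alpha> \<equiv> rstm_alpha (real CARD('b))"
    and "L0 \<equiv> Min (range L)"
    and "fstar \<equiv> f xstar"
  assumes blk_surj: "surj blk"
    and eucl_Q: "\<forall>i. eucl i \<longrightarrow> QE i \<subseteq> blkspace blk i \<and> closed (QE i) \<and> convex (QE i)"
    and eucl_B: "\<forall>i. eucl i \<longrightarrow> (\<forall>c d. B i c d = B i d c) \<and>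
                   (\<forall>h\<in>blkspace blk i. h \<noteq> 0 \<longrightarrow>
                      (\<Sum>c\<in>{c. blk c = i}. \<Sum>d\<in>{d. blk d = i}. B i c d * h $ c * h $ d) > 0)"
    and f_convex: "convex_on UNIV f"
    and f_grad: "\<forall>z. (f has_derivative (\<lambda>h. grad z \<bullet> h)) (at z)"
    and L_pos: "\<forall>i. L i > 0"
    and lipschitz: "\<forall>i z h. z \<in> Q \<and> h \<in> blkspace blk i \<and> z + h \<in> Q \<longrightarrow>
                      dnorm blk eucl B i (grad (z + h) - grad z) \<le> L i * bnorm blk eucl B i h"
    and xstar_min: "xstar \<in> Q" "\<forall>z\<in>Q. f xstar \<le> f z"
    and u0_Q: "u0 \<in> Q"
    and u0_relint: "\<forall>i. \<not> eucl i \<longrightarrow> blockpart blk i u0 \<in> rel_interior (simplex_blk blk i)"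
    and noise: "\<forall>j i z. z \<in> Q \<longrightarrow> dnorm blk eucl B i (\<xi> j i z) \<le> \<Delta>"
    and init: "\<forall>\<omega>. u 0 \<omega> = u0 \<and> x 0 \<omega> = u0 \<and> y 0 \<omega> = u0"
    and y_step: "\<forall>j \<omega>. y (Suc j) \<omega> = (1 / A (Suc j)) *\<^sub>R (\<alpha> (Suc j) *\<^sub>R u j \<omega> + A j *\<^sub>R x j \<omega>)"
    and u_step: "\<forall>j \<omega>. u (Suc j) \<omega> \<in> Q \<and>
                   (\<forall>z\<in>Q. V (u j \<omega>) (u (Suc j) \<omega>) + \<alpha> (Suc j) *
                            ((n *\<^sub>R blockpart blk (\<omega> j) (grad (y (Suc j) \<omega>) + \<xi> j (\<omega> j) (y (Suc j) \<omega>)))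
                               \<bullet> u (Suc j) \<omega>)
                        \<le> V (u j \<omega>) z + \<alpha> (Suc j) *
                            ((n *\<^sub>R blockpart blk (\<omega> j) (grad (y (Suc j) \<omega>) + \<xi> j (\<omega> j) (y (Suc j) \<omega>)))
                               \<bullet> z))"
    and x_step: "\<forall>j \<omega>. x (Suc j) \<omega> = y (Suc j) \<omega> + (n * \<alpha> (Suc j) / A (Suc j)) *\<^sub>R (u (Suc j) \<omega> - u j \<omega>)"
    and k_pos: "k \<ge> 1"
  shows "let P0sq = (1 - 1 / n) * (f u0 - fstar) + V u0 xstar;
             Ef = measure_pmf.expectation (Pi_pmf {..<k} undefined (\<lambda>_. pmf_of_set (UNIV :: 'b set)))
                    (\<lambda>\<omega>. f (x k \<omega>))
         in (\<Delta> \<le> sqrt P0sq * sqrt L0 / (4 * n * A k) \<longrightarrow>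
               Ef - fstar \<le> 6 * n\<^sup>2 * P0sq / (real k - 1 + 2 * n)\<^sup>2)
          \<and> Ef - fstar \<le> 8 * n\<^sup>2 * P0sq / (real k - 1 + 2 * n)\<^sup>2
                          + 4 / L0 * (real k - 1 + 2 * n)\<^sup>2 * \<Delta>\<^sup>2"
proof -
  interpret M: rstm blk eucl QE B L f grad xstar u0 \<xi> \<Delta> u x y
    using eucl_Q eucl_B L_pos f_convex f_grad lipschitz xstar_min u0_Q u0_relint noise init
      y_step u_step x_step
    unfolding Q_def V_def A_def \<alpha>_def n_def by unfold_locales (auto simp: quad_form_def)
  show ?thesis
    using M.expected_gap_bound_small_noise[OF k_pos] M.expected_gap_bound[OF k_pos]
    unfolding Let_def n_def A_def V_def L0_def fstar_def M.L0_def M.P0_def block_choices_def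
    by blast
qed

end
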